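(* For every $q\ge0$, the $W(m,n)$-module $\mathcal V(\theta_q)$ is generated by the single vector $y_n\otimes(e^*_{m+n})^q\otimes1_{\mathcal E}$.
   Context: $\mathbb F$ algebraically closed of characteristic $0$, $m,n\ge1$. $\mathcal R=\mathbb F[x_1,\dots,x_m]\otimes\Lambda(y_1,\dots,y_n)$ ($x_i$ even, $y_s$ odd). $\mathfrak g=W(m,n)$ the Lie superalgebra of superderivations of $\mathcal R$, free over $\mathcal R$ on even $\partial_i$ and odd $D_t$, with $\mathfrak g_0\cong\mathfrak{gl}(m|n)$ via $x_i\partial_j\mapsto E_{ij}$, $x_iD_s\mapsto E_{i,m+s}$, $y_r\partial_j\mapsto E_{m+r,j}$, $y_rD_s\mapsto E_{m+r,m+s}$; weights $\epsilon_i,\delta_s$ as usual. $\mathcal E=\sum_{i=1}^m\epsilon_i-\sum_{j=1}^n\delta_j$ and $\theta_q=\mathcal E-q\delta_n$. $V^*$ is the dual of the natural module $V=\mathbb F^{m|n}$ with dual basis $e^*_i$ ($e_i^*$ even iff $i\le m$), action $(X.f)(v)=-(-1)^{\wp(X)\wp(f)}f(Xv)$; $\Omega^q(V^* )$ its $q$-th super-Grassmann power (tensor algebra modulo $u\otimes w+(-1)^{\wp(u)\wp(w)}w\otimes u$); $\mathbb F_{\mathcal E}=\mathbb F1_{\mathcal E}$ the one-dimensional $\mathfrak{gl}(m|n)$-module of weight $\mathcal E$. Then $L^0(\theta_q)=\Omega^q(V^* )\otimes\mathbb F_{\mathcal E}$ is irreducible of highest weight $\theta_q$. $\mathcal V(\theta_q)=\mathcal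 R\otimes L^0(\theta_q)$ is the mixed-product module with action (homogeneous $f,g$, $\xi$ the $\mathfrak g_0$-action): $f\partial_i.(g\otimes v)=f\partial_i(g)\otimes v+\sum_j\partial_j(f)g\otimes\xi(x_j\partial_i)v+(-1)^{\wp(f)+\wp(g)+1}\sum_jD_j(f)g\otimes\xi(y_j\partial_i)v$, $fD_i.(g\otimes v)=fD_i(g)\otimes v+(-1)^{\wp(g)}\sum_j\partial_j(f)g\otimes\xi(x_jD_i)v+(-1)^{\wp(f)+1}\sum_jD_j(f)g\otimes\xi(y_jD_i)v$. *)

theory Defs
  imports "HOL-Computational_Algebra.Polynomial"
begin

(* Basis monomials of R = F[x_1..x_m] \<otimes> Lambda(y_1..y_n):
   (alpha, S) stands for x^alpha * y_{s_1} ... y_{s_k}, s_1 < ... < s_k, S = {s_1,...,s_k}. *)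
type_synonym rmon = "(nat \<Rightarrow> nat) \<times> nat set"
(* Basis of R \<otimes> T^q(Vdual): a monomial of R and a word e*_{w_1} \<otimes> ... \<otimes> e*_{w_q} *)
type_synonym bidx = "rmon \<times> nat list"

definition valid_rmon :: "nat \<Rightarrow> nat \<Rightarrow> rmon \<Rightarrow> bool" where
  "valid_rmon m n \<mu> \<longleftrightarrow> (\<forall>i. fst \<mu> i \<noteq> 0 \<longrightarrow> 1 \<le> i \<and> i \<le> m) \<and> snd \<mu> \<subseteq> {1..n}"

definition rpar :: "rmon \<Rightarrow> nat" where
  "rpar \<mu> = card (snd \<mu>) mod 2"

definition vpar :: "nat \<Rightarrow> nat \<Rightarrow> nat" where
  "vpar m c = (if c \<le> m then 0 else 1)"

definition mul_mon :: "rmon \<Rightarrow> rmon \<Rightarrow> 'a::comm_ring_1 \<times> rmon" where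
  "mul_mon \<mu> \<nu> = (if snd \<mu> \<inter> snd \<nu> = {}
     then ((-1) ^ card {(s,t). s \<in> snd \<mu> \<and> t \<in> snd \<nu> \<and> t < s},
           (\<lambda>i. fst \<mu> i + fst \<nu> i, snd \<mu> \<union> snd \<nu>))
     else (0, \<mu>))"

definition dx :: "nat \<Rightarrow> rmon \<Rightarrow> 'a::comm_ring_1 \<times> rmon" where
  "dx i \<mu> = (of_nat (fst \<mu> i), ((fst \<mu>)(i := fst \<mu> i - 1), snd \<mu>))"

(* D_t (odd derivation, d/dy_t from the left) applied to a monomial *)
definition dy :: "nat \<Rightarrow> rmon \<Rightarrow> 'a::comm_ring_1 \<times> rmon" where
  "dy t \<mu> = (if t \<in> snd \<mu> then ((-1) ^ card {s \<in> snd \<mu>. s < t}, (fst \<mu>, snd \<mu> - {t}))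
             else (0, \<mu>))"

definition sv :: "'a::zero \<Rightarrow> 'b \<Rightarrow> 'b \<Rightarrow> 'a" where
  "sv c b = (\<lambda>b'. if b' = b then c else 0)"

definition tens :: "(rmon \<Rightarrow> 'a::times) \<Rightarrow> (nat list \<Rightarrow> 'a) \<Rightarrow> bidx \<Rightarrow> 'a" where
  "tens g t = (\<lambda>(\<nu>, w). g \<nu> * t w)"

definition lterm :: "'a::comm_ring_1 \<times> rmon \<Rightarrow> rmon \<Rightarrow> (nat list \<Rightarrow> 'a) \<Rightarrow> bidx \<Rightarrow> 'a" where
  "lterm p \<nu> t = (case p of (c1, \<rho>1) \<Rightarrow>
     (case mul_mon \<rho>1 \<nu> of (c2, \<rho>2) \<Rightarrow> tens (sv (c1 * c2) \<rho>2) t))"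

definition rterm :: "rmon \<Rightarrow> 'a::comm_ring_1 \<times> rmon \<Rightarrow> (nat list \<Rightarrow> 'a) \<Rightarrow> bidx \<Rightarrow> 'a" where
  "rterm \<mu> p t = (case p of (c1, \<rho>1) \<Rightarrow>
     (case mul_mon \<mu> \<rho>1 of (c2, \<rho>2) \<Rightarrow> tens (sv (c1 * c2) \<rho>2) t))"

(* action of the matrix unit E_{ab} of gl(m|n) on the basis word w of
   T^q(Vdual) \<otimes> F_E  (the F_E factor is identified with F, contributing
   the supertrace weight E on the diagonal).  E_{ab} e*_c = -(-1)^{p(E_ab) p(c)} delta_{ac} e*_b,
   extended to tensors with the Koszul sign rule. *)
definition xi :: "nat \<Rightarrow> nat \<Rightarrow> nat \<Rightarrow> nat list \<Rightarrow> nat list \<Rightarrow> 'a::comm_ring_1" where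
  "xi m a b w = (\<lambda>w'.
     (\<Sum>k\<in>{k. k < length w \<and> w ! k = a \<and> w' = w[k := b]}.
        - ((-1) ^ ((vpar m a + vpar m b) * (vpar m a + (\<Sum>l<k. vpar m (w ! l))))))
     + (if a = b \<and> w' = w then (if a \<le> m then 1 else -1) else 0))"

(* action of f partial_i (f the monomial mu) on the basis vector g \<otimes> w, g = nu *)
definition act_d :: "nat \<Rightarrow> nat \<Rightarrow> nat \<Rightarrow> rmon \<Rightarrow> bidx \<Rightarrow> bidx \<Rightarrow> 'a::comm_ring_1" where
  "act_d m n i \<mu> b = (case b of (\<nu>, w) \<Rightarrow> (\<lambda>b'.
      rterm \<mu> (dx i \<nu>) (sv 1 w) b'
    + (\<Sum>j\<in>{1..m}. lterm (dx j \<mu>) \<nu> (xi m j i w) b')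
    + (-1) ^ (rpar \<mu> + rpar \<nu> + 1) * (\<Sum>j\<in>{1..n}. lterm (dy j \<mu>) \<nu> (xi m (m + j) i w) b')))"

(* action of f D_i (f the monomial mu) on the basis vector g \<otimes> w, g = nu *)
definition act_D :: "nat \<Rightarrow> nat \<Rightarrow> nat \<Rightarrow> rmon \<Rightarrow> bidx \<Rightarrow> bidx \<Rightarrow> 'a::comm_ring_1" where
  "act_D m n i \<mu> b = (case b of (\<nu>, w) \<Rightarrow> (\<lambda>b'.
      rterm \<mu> (dy i \<nu>) (sv 1 w) b'
    + (-1) ^ (rpar \<nu>) * (\<Sum>j\<in>{1..m}. lterm (dx j \<mu>) \<nu> (xi m j (m + i) w) b')
    + (-1) ^ (rpar \<mu> + 1) * (\<Sum>j\<in>{1..n}. lterm (dy j \<mu>) \<nu> (xi m (m + j) (m + i) w) b')))"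

definition lin_ext :: "(bidx \<Rightarrow> bidx \<Rightarrow> 'a::comm_ring_1) \<Rightarrow> (bidx \<Rightarrow> 'a) \<Rightarrow> bidx \<Rightarrow> 'a" where
  "lin_ext B v = (\<lambda>b'. \<Sum>b\<in>{b. v b \<noteq> 0}. v b * B b b')"

(* An element of W(m,n): sum_i f_i partial_i + sum_t g_t D_t, given by coefficient vectors in R *)
type_synonym 'a welt = "(nat \<Rightarrow> rmon \<Rightarrow> 'a) \<times> (nat \<Rightarrow> rmon \<Rightarrow> 'a)"

definition valid_W :: "nat \<Rightarrow> nat \<Rightarrow> 'a::zero welt \<Rightarrow> bool" where
  "valid_W m n X \<longleftrightarrow>
     (\<forall>i. finite {\<mu>. fst X i \<mu> \<noteq> 0} \<and>
          (\<forall>\<mu>. fst X i \<mu> \<noteq> 0 \<longrightarrow> 1 \<le> i \<and> i \<le> m \<and> valid_rmon m n \<mu>)) \<and>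
     (\<forall>i. finite {\<mu>. snd X i \<mu> \<noteq> 0} \<and>
          (\<forall>\<mu>. snd X i \<mu> \<noteq> 0 \<longrightarrow> 1 \<le> i \<and> i \<le> n \<and> valid_rmon m n \<mu>))"

definition act :: "nat \<Rightarrow> nat \<Rightarrow> 'a::comm_ring_1 welt \<Rightarrow> (bidx \<Rightarrow> 'a) \<Rightarrow> bidx \<Rightarrow> 'a" where
  "act m n X v = (\<lambda>b'.
      (\<Sum>i\<in>{1..m}. \<Sum>\<mu>\<in>{\<mu>. fst X i \<mu> \<noteq> 0}. fst X i \<mu> * lin_ext (act_d m n i \<mu>) v b')
    + (\<Sum>i\<in>{1..n}. \<Sum>\<mu>\<in>{\<mu>. snd X i \<mu> \<noteq> 0}. snd X i \<mu> * lin_ext (act_D m n i \<mu>) v b'))"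

(* R \<otimes> T^q(Vdual) \<otimes> F_E, as finitely supported coefficient functions *)
definition Mcar :: "nat \<Rightarrow> nat \<Rightarrow> nat \<Rightarrow> (bidx \<Rightarrow> 'a::zero) set" where
  "Mcar m n q = {v. finite {b. v b \<noteq> 0} \<and>
      (\<forall>b. v b \<noteq> 0 \<longrightarrow> valid_rmon m n (fst b) \<and> length (snd b) = q \<and> set (snd b) \<subseteq> {1..m+n})}"

(* spanning set of R \<otimes> (degree-q part of the ideal of super-Grassmann relations) *)
definition Krel :: "nat \<Rightarrow> nat \<Rightarrow> nat \<Rightarrow> (bidx \<Rightarrow> 'a::comm_ring_1) set" where
  "Krel m n q = {tens (sv 1 \<nu>)
        (\<lambda>w'. (if w' = a @ [c, d] @ e then 1 else 0)
            + (if w' = a @ [d, c] @ e then (-1) ^ (vpar m c * vpar m d) else 0))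
      | \<nu> a c d e. valid_rmon m n \<nu> \<and> length a + length e + 2 = q \<and> set (a @ [c, d] @ e) \<subseteq> {1..m+n}}"

inductive_set lspan :: "('b \<Rightarrow> 'a::comm_ring_1) set \<Rightarrow> ('b \<Rightarrow> 'a) set" for A where
  zero: "(\<lambda>_. 0) \<in> lspan A"
| comb: "v \<in> A \<Longrightarrow> x \<in> lspan A \<Longrightarrow> (\<lambda>b. c * v b + x b) \<in> lspan A"

inductive_set gen_sub :: "nat \<Rightarrow> nat \<Rightarrow> (bidx \<Rightarrow> 'a::comm_ring_1) \<Rightarrow> (bidx \<Rightarrow> 'a) set"
  for m n v0 where
  base: "v0 \<in> gen_sub m n v0"
| add: "u \<in> gen_sub m n v0 \<Longrightarrow> w \<in> gen_sub m n v0 \<Longrightarrow> (\<lambda>b. u b + w b) \<in> gen_sub m n v0"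
| smul: "u \<in> gen_sub m n v0 \<Longrightarrow> (\<lambda>b. c * u b) \<in> gen_sub m n v0"
| action: "u \<in> gen_sub m n v0 \<Longrightarrow> valid_W m n X \<Longrightarrow> act m n X u \<in> gen_sub m n v0"

definition vgen :: "nat \<Rightarrow> nat \<Rightarrow> nat \<Rightarrow> bidx \<Rightarrow> 'a::comm_ring_1" where
  "vgen m n q = tens (sv 1 (\<lambda>_. 0, {n})) (sv 1 (replicate q (m + n)))"

end

theory Submission
  imports Defs
begin

text \<open>Write \<open>T = m + n\<close>, so that \<open>e*_T\<close> is odd. It suffices to show that every basis
  vector \<open>\<nu> \<otimes> e*_(w_1) \<otimes> ... \<otimes> e*_(w_q)\<close> of \<open>R \<otimes> (V*)^(\<otimes>q) \<otimes> F_\<E>\<close> lies in the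
  submodule generated by \<open>v0 = y_n \<otimes> (e*_T)^q\<close> plus the span of the super-Grassmann relations.
  Applying \<open>D_n\<close> and then the fields \<open>x^(\<alpha>+\<epsilon>_1) y_(S-{n}) \<partial>_1\<close> to \<open>v0\<close> produces every
  \<open>x^\<alpha> y_S \<otimes> (e*_T)^q\<close>.

  The fields \<open>y_n \<partial>_b\<close> and \<open>y_n D_(b-m)\<close> preserve the relations, and send \<open>\<nu> \<otimes> w\<close> to a
  derivative term with the same word plus \<open>\<nu> \<otimes> \<xi>(E_(T,b)) w\<close>, the signed sum over all ways of
  replacing one letter \<open>T\<close> of \<open>w\<close> by \<open>b\<close>. For \<open>w = T^r s\<close>, the replacements inside
  \<open>s\<close> give words of the same shape, and modulo the relations the \<open>r\<close> replacements in the prefix are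
  all equal to the same multiple \<open>\<plusminus>T^(r-1) b s\<close>. Hence \<open>r\<close> times this word is reached,
  and characteristic \<open>0\<close> allows dividing by \<open>r\<close>; induction on the length of \<open>s\<close> reaches
  every word.\<close>

definition fin_supp :: "('b \<Rightarrow> 'a::zero) \<Rightarrow> bool" where
  "fin_supp v \<longleftrightarrow> finite {b. v b \<noteq> 0}"

lemma fin_supp_sv: "fin_supp (sv (c::'a::zero) x)"
proof -
  have "{y. sv c x y \<noteq> 0} \<subseteq> {x}" by (auto simp: sv_def split: if_splits)
  then show ?thesis unfolding fin_supp_def by (rule finite_subset) simp
qed

lemma fin_supp_smul: "fin_supp v \<Longrightarrow> fin_supp (\<lambda>b. c * v b :: 'a::comm_ring_1)"
  unfolding fin_supp_def by (rule finite_subset[rotated]) auto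

lemma fin_supp_diff: "fin_supp u \<Longrightarrow> fin_supp v \<Longrightarrow> fin_supp (\<lambda>b. u b - v b :: 'a::comm_ring_1)"
  unfolding fin_supp_def by (rule finite_subset[of _ "{b. u b \<noteq> 0} \<union> {b. v b \<noteq> 0}"]) auto

lemma fin_supp_expansion:
  assumes "fin_supp f"
  shows "(\<Sum>w\<in>{w. f w \<noteq> 0}. f w * sv 1 w w') = (f w' :: 'a::comm_ring_1)"
proof -
  have "(\<Sum>w\<in>{w. f w \<noteq> 0}. f w * sv 1 w w') = (\<Sum>w\<in>{w. f w \<noteq> 0}. if w' = w then f w else 0)"
    by (rule sum.cong) (auto simp: sv_def)
  also have "\<dots> = f w'" using assms by (simp add: fin_supp_def)
  finally show ?thesis .
qed

lemma lspan_base: "v \<in> A \<Longrightarrow> v \<in> lspan A"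
  using lspan.comb[OF _ lspan.zero, of v A 1] by simp

lemma lspan_add: "x \<in> lspan A \<Longrightarrow> y \<in> lspan A \<Longrightarrow> (\<lambda>b. x b + y b) \<in> lspan A"
proof (induction x rule: lspan.induct)
  case zero then show ?case by simp
next
  case (comb v x c)
  have "(\<lambda>b. c * v b + x b + y b) = (\<lambda>b. c * v b + (x b + y b))" by (simp add: add.assoc)
  then show ?case using lspan.comb[OF comb.hyps(1) comb.IH[OF comb.prems], of c] by simp
qed

lemma lspan_smul: "x \<in> lspan A \<Longrightarrow> (\<lambda>b. c * x b) \<in> lspan A"
proof (induction x rule: lspan.induct)
  case zero then show ?case using lspan.zero by simp
next
  case (comb v x d)
  have "(\<lambda>b. c * (d * v b + x b)) = (\<lambda>b. (c * d) * v b + c * x b)" by (simp add: algebra_simps)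
  then show ?case using lspan.comb[OF comb(1) comb(3), of "c * d"] by simp
qed

lemma lspan_sum:
  "finite I \<Longrightarrow> (\<And>i. i \<in> I \<Longrightarrow> f i \<in> lspan A) \<Longrightarrow> (\<lambda>b. \<Sum>i\<in>I. f i b) \<in> lspan A"
proof (induction I rule: finite_induct)
  case empty then show ?case using lspan.zero by simp
next
  case (insert i I)
  then show ?case using lspan_add[of "f i" A "\<lambda>b. \<Sum>i\<in>I. f i b"] by simp
qed

lemma lspan_fin_supp: "x \<in> lspan A \<Longrightarrow> (\<And>v. v \<in> A \<Longrightarrow> fin_supp v) \<Longrightarrow> fin_supp x"
proof (induction x rule: lspan.induct)
  case zero then show ?case by (simp add: fin_supp_def)
next
  case (comb v x c)
  have "{b. c * v b + x b \<noteq> 0} \<subseteq> {b. v b \<noteq> 0} \<union> {b. x b \<noteq> 0}" by auto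
  then show ?case using comb by (auto simp: fin_supp_def intro: finite_subset)
qed

lemma lin_ext_superset:
  "finite S \<Longrightarrow> {b. v b \<noteq> 0} \<subseteq> S \<Longrightarrow> lin_ext B v b' = (\<Sum>b\<in>S. v b * B b b')"
  unfolding lin_ext_def by (rule sum.mono_neutral_left) auto

lemma lin_ext_add:
  assumes u: "fin_supp u" and v: "fin_supp v"
  shows "lin_ext B (\<lambda>b. u b + v b) = (\<lambda>b'. lin_ext B u b' + lin_ext B v b')"
proof
  fix b'
  let ?S = "{b. u b \<noteq> 0} \<union> {b. v b \<noteq> 0}"
  have S: "finite ?S" using u v by (simp add: fin_supp_def)
  have "lin_ext B (\<lambda>b. u b + v b) b' = (\<Sum>b\<in>?S. (u b + v b) * B b b')"
    by (rule lin_ext_superset[OF S]) auto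
  also have "\<dots> = (\<Sum>b\<in>?S. u b * B b b') + (\<Sum>b\<in>?S. v b * B b b')"
    by (simp add: distrib_right sum.distrib)
  also have "\<dots> = lin_ext B u b' + lin_ext B v b'"
    using lin_ext_superset[OF S, of u B b'] lin_ext_superset[OF S, of v B b'] by auto
  finally show "lin_ext B (\<lambda>b. u b + v b) b' = lin_ext B u b' + lin_ext B v b'" .
qed

lemma lin_ext_smul:
  assumes "fin_supp u"
  shows "lin_ext B (\<lambda>b. c * u b) = (\<lambda>b'. c * lin_ext B u b')"
proof
  fix b'
  have S: "finite {b. u b \<noteq> 0}" using assms by (simp add: fin_supp_def)
  have "lin_ext B (\<lambda>b. c * u b) b' = (\<Sum>b\<in>{b. u b \<noteq> 0}. (c * u b) * B b b')"
    by (rule lin_ext_superset[OF S]) auto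
  then show "lin_ext B (\<lambda>b. c * u b) b' = c * lin_ext B u b'"
    by (simp add: lin_ext_def sum_distrib_left mult.assoc)
qed

lemma lin_ext_sv: "lin_ext B (sv 1 b0) = B b0"
proof
  fix b'
  have "lin_ext B (sv 1 b0) b' = (\<Sum>b\<in>{b0}. sv 1 b0 b * B b b')"
    by (rule lin_ext_superset) (auto simp: sv_def)
  then show "lin_ext B (sv 1 b0) b' = B b0 b'" by (simp add: sv_def)
qed

lemma lin_ext_lspan:
  assumes "\<And>v. v \<in> A \<Longrightarrow> fin_supp v" and "\<And>v. v \<in> A \<Longrightarrow> lin_ext B v \<in> lspan K"
  shows "x \<in> lspan A \<Longrightarrow> lin_ext B x \<in> lspan K"
proof (induction x rule: lspan.induct)
  case zero then show ?case by (simp add: lin_ext_def lspan.zero)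
next
  case (comb v x c)
  have fv: "fin_supp v" using assms(1) comb.hyps(1) .
  have fx: "fin_supp x" using lspan_fin_supp[OF comb.hyps(2) assms(1)] .
  have "lin_ext B (\<lambda>y. c * v y + x y) = (\<lambda>y. c * lin_ext B v y + lin_ext B x y)"
    by (simp add: lin_ext_add[OF fin_supp_smul[OF fv] fx] lin_ext_smul[OF fv])
  then show ?case using lspan_add[OF lspan_smul[OF assms(2)[OF comb.hyps(1)]] comb.IH] by simp
qed

lemma gen_sub_zero: "(\<lambda>b. 0) \<in> gen_sub m n v0"
  using gen_sub.smul[OF gen_sub.base, of 0] by simp

lemma gen_sub_cancel:
  assumes "(\<lambda>b. c * x b) \<in> gen_sub m n v0" and "(c::'a::field) \<noteq> 0"
  shows "x \<in> gen_sub m n v0"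
  using gen_sub.smul[OF assms(1), of "inverse c"] assms(2) by (simp add: mult.assoc[symmetric])

definition gen_mod_rel :: "nat \<Rightarrow> nat \<Rightarrow> nat \<Rightarrow> (bidx \<Rightarrow> 'a::comm_ring_1) set" where
  "gen_mod_rel m n q =
     {v. \<exists>u\<in>gen_sub m n (vgen m n q). \<exists>k\<in>lspan (Krel m n q). v = (\<lambda>b. u b + k b)}"

lemma gen_mod_relI:
  "u \<in> gen_sub m n (vgen m n q) \<Longrightarrow> k \<in> lspan (Krel m n q) \<Longrightarrow> v = (\<lambda>b. u b + k b)
   \<Longrightarrow> v \<in> gen_mod_rel m n q"
  unfolding gen_mod_rel_def by blast

lemma gen_mod_relE:
  assumes "v \<in> gen_mod_rel m n q"
  obtains u k where "u \<in> gen_sub m n (vgen m n q)" "k \<in> lspan (Krel m n q)" "v = (\<lambda>b. u b + k b)"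
  using assms unfolding gen_mod_rel_def by blast

lemma gen_mod_rel_gen_sub: "u \<in> gen_sub m n (vgen m n q) \<Longrightarrow> u \<in> gen_mod_rel m n q"
  by (rule gen_mod_relI[OF _ lspan.zero]) auto

lemma gen_mod_rel_lspan: "k \<in> lspan (Krel m n q) \<Longrightarrow> k \<in> gen_mod_rel m n q"
  by (rule gen_mod_relI[OF gen_sub_zero]) auto

lemma gen_mod_rel_zero: "(\<lambda>b. 0) \<in> gen_mod_rel m n q"
  using gen_mod_rel_gen_sub gen_sub_zero by blast

lemma gen_mod_rel_add:
  assumes "x \<in> gen_mod_rel m n q" and "y \<in> gen_mod_rel m n q"
  shows "(\<lambda>b. x b + y b) \<in> gen_mod_rel m n q"
proof -
  obtain u1 k1 where 1: "u1 \<in> gen_sub m n (vgen m n q)" "k1 \<in> lspan (Krel m n q)" "x = (\<lambda>b. u1 b + k1 b)"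
    using assms(1) by (rule gen_mod_relE)
  obtain u2 k2 where 2: "u2 \<in> gen_sub m n (vgen m n q)" "k2 \<in> lspan (Krel m n q)" "y = (\<lambda>b. u2 b + k2 b)"
    using assms(2) by (rule gen_mod_relE)
  show ?thesis
    by (rule gen_mod_relI[OF gen_sub.add[OF 1(1) 2(1)] lspan_add[OF 1(2) 2(2)]])
      (simp add: 1(3) 2(3) algebra_simps)
qed

lemma gen_mod_rel_smul:
  assumes "x \<in> gen_mod_rel m n q"
  shows "(\<lambda>b. c * x b) \<in> gen_mod_rel m n q"
proof -
  obtain u k where uk: "u \<in> gen_sub m n (vgen m n q)" "k \<in> lspan (Krel m n q)" "x = (\<lambda>b. u b + k b)"
    using assms by (rule gen_mod_relE)
  show ?thesis
    by (rule gen_mod_relI[OF gen_sub.smul[OF uk(1)] lspan_smul[OF uk(2)]]) (simp add: uk(3) algebra_simps)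
qed

lemma gen_mod_rel_diff:
  "x \<in> gen_mod_rel m n q \<Longrightarrow> y \<in> gen_mod_rel m n q \<Longrightarrow> (\<lambda>b. x b - y b) \<in> gen_mod_rel m n q"
  using gen_mod_rel_add[of x m n q "\<lambda>b. (-1) * y b"] gen_mod_rel_smul[of y m n q "-1"] by simp

lemma gen_mod_rel_sum:
  "finite I \<Longrightarrow> (\<And>i. i \<in> I \<Longrightarrow> f i \<in> gen_mod_rel m n q) \<Longrightarrow> (\<lambda>b. \<Sum>i\<in>I. f i b) \<in> gen_mod_rel m n q"
proof (induction I rule: finite_induct)
  case empty then show ?case using gen_mod_rel_zero by simp
next
  case (insert i I)
  then show ?case using gen_mod_rel_add[of "f i" m n q "\<lambda>b. \<Sum>i\<in>I. f i b"] by simp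
qed

lemma gen_mod_rel_cancel:
  assumes "(\<lambda>b. c * x b) \<in> gen_mod_rel m n q" and "(c::'a::field) \<noteq> 0"
  shows "x \<in> gen_mod_rel m n q"
  using gen_mod_rel_smul[OF assms(1), of "inverse c"] assms(2) by (simp add: mult.assoc[symmetric])

definition one_mon :: rmon where "one_mon = ((\<lambda>_. 0), {})"

definition y_mon :: "nat \<Rightarrow> rmon" where "y_mon t = ((\<lambda>_. 0), {t})"

lemma mul_mon_one_left: "mul_mon one_mon \<nu> = ((1::'a::comm_ring_1), \<nu>)"
  by (simp add: mul_mon_def one_mon_def)

lemma mul_mon_one_right: "mul_mon \<nu> one_mon = ((1::'a::comm_ring_1), \<nu>)"
  by (simp add: mul_mon_def one_mon_def)

lemma dx_one_mon: "dx j one_mon = ((0::'a::comm_ring_1), one_mon)"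
  by (simp add: dx_def one_mon_def fun_upd_def)

lemma dx_y_mon: "dx j (y_mon t) = ((0::'a::comm_ring_1), y_mon t)"
  by (simp add: dx_def y_mon_def fun_upd_def)

lemma dy_one_mon: "dy j one_mon = ((0::'a::comm_ring_1), one_mon)"
  by (simp add: dy_def one_mon_def)

lemma dy_y_mon: "dy j (y_mon t) = (if j = t then ((1::'a::comm_ring_1), one_mon) else (0, y_mon t))"
proof -
  have "card {s. s = t \<and> s < t} = 0" by simp
  then have "(-1::'a) ^ card {s. s = t \<and> s < t} = 1" by (subst \<open>card _ = 0\<close>) simp
  then show ?thesis by (auto simp: dy_def y_mon_def one_mon_def)
qed

lemma rpar_y_mon: "rpar (y_mon t) = 1"
  by (simp add: rpar_def y_mon_def)

lemma valid_rmon_y_mon: "1 \<le> t \<Longrightarrow> t \<le> n \<Longrightarrow> valid_rmon m n (y_mon t)"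
  by (simp add: valid_rmon_def y_mon_def)

lemma valid_rmon_one_mon: "valid_rmon m n one_mon"
  by (simp add: valid_rmon_def one_mon_def)

lemma valid_rmon_dx: "valid_rmon m n \<nu> \<Longrightarrow> valid_rmon m n (snd (dx i \<nu>))"
  by (auto simp: valid_rmon_def dx_def split: if_splits)

lemma valid_rmon_dy: "valid_rmon m n \<nu> \<Longrightarrow> valid_rmon m n (snd (dy i \<nu>))"
  by (auto simp: valid_rmon_def dy_def split: if_splits)

lemma valid_rmon_mul_mon:
  "valid_rmon m n \<mu> \<Longrightarrow> valid_rmon m n \<nu> \<Longrightarrow> valid_rmon m n (snd (mul_mon \<mu> \<nu>))"
  by (auto simp: valid_rmon_def mul_mon_def split: if_splits)

lemma tens_sv_sv: "tens (sv 1 \<nu>) (sv (1::'a::comm_ring_1) w) = sv 1 (\<nu>, w)"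
  by (auto simp: tens_def sv_def fun_eq_iff)

lemma tens_sv_scale:
  "tens (sv c \<rho>) t = (\<lambda>x. c * tens (sv 1 \<rho>) t x :: 'a::comm_ring_1)"
  by (auto simp: tens_def sv_def fun_eq_iff)

lemma tens_zero_left: "tens (sv 0 \<rho>) t = (\<lambda>x. 0 :: 'a::comm_ring_1)"
  by (auto simp: tens_def sv_def fun_eq_iff)

lemma tens_zero_right: "tens g (\<lambda>_. 0) = (\<lambda>x. 0 :: 'a::comm_ring_1)"
  by (auto simp: tens_def fun_eq_iff)

lemma tens_add:
  "tens (sv 1 \<nu>) (\<lambda>w. f w + g w) = (\<lambda>x. tens (sv 1 \<nu>) f x + tens (sv 1 \<nu>) g x :: 'a::comm_ring_1)"
  by (auto simp: tens_def fun_eq_iff algebra_simps)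

lemma tens_smul: "tens (sv 1 \<nu>) (\<lambda>w. c * f w) = (\<lambda>x. c * tens (sv 1 \<nu>) f x :: 'a::comm_ring_1)"
  by (rule ext) (simp add: tens_def split_def mult.left_commute)

lemma fin_supp_tens: "fin_supp f \<Longrightarrow> fin_supp (tens (sv 1 \<nu>) f :: bidx \<Rightarrow> 'a::comm_ring_1)"
  unfolding fin_supp_def
  by (rule finite_subset[of _ "Pair \<nu> ` {w. f w \<noteq> 0}"]) (auto simp: tens_def sv_def split: if_splits)

lemma lin_ext_tens:
  assumes "fin_supp f"
  shows "lin_ext B (tens (sv 1 \<nu>) f) b' = (\<Sum>w\<in>{w. f w \<noteq> 0}. f w * B (\<nu>, w) b' :: 'a::comm_ring_1)"
proof -
  have S: "finite (Pair \<nu> ` {w. f w \<noteq> 0})" using assms by (simp add: fin_supp_def)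
  have "lin_ext B (tens (sv 1 \<nu>) f) b' = (\<Sum>x\<in>Pair \<nu> ` {w. f w \<noteq> 0}. tens (sv 1 \<nu>) f x * B x b')"
    by (rule lin_ext_superset[OF S]) (auto simp: tens_def sv_def split: if_splits)
  also have "\<dots> = (\<Sum>w\<in>{w. f w \<noteq> 0}. f w * B (\<nu>, w) b')"
    by (subst sum.reindex) (auto simp: inj_on_def tens_def sv_def)
  finally show ?thesis .
qed

lemma lterm_eq:
  "lterm p \<nu> t = tens (sv (fst p * fst (mul_mon (snd p) \<nu>)) (snd (mul_mon (snd p) \<nu> :: 'a \<times> rmon))) t"
  for t :: "nat list \<Rightarrow> 'a::comm_ring_1"
  unfolding lterm_def by (simp add: case_prod_beta)

lemma rterm_eq:
  "rterm \<mu> p t = tens (sv (fst p * fst (mul_mon \<mu> (snd p))) (snd (mul_mon \<mu> (snd p) :: 'a \<times> rmon))) t"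
  for t :: "nat list \<Rightarrow> 'a::comm_ring_1"
  unfolding rterm_def by (simp add: case_prod_beta)

lemma lterm_zero: "lterm (0, \<rho>) \<nu> t = (\<lambda>x. 0 :: 'a::comm_ring_1)"
  by (simp add: lterm_eq tens_zero_left)

lemma rterm_zero: "rterm \<mu> (0, \<rho>) t = (\<lambda>x. 0 :: 'a::comm_ring_1)"
  by (simp add: rterm_eq tens_zero_left)

definition mon_d :: "nat \<Rightarrow> rmon \<Rightarrow> 'a::comm_ring_1 welt" where
  "mon_d i \<mu> = ((\<lambda>j \<nu>. if j = i \<and> \<nu> = \<mu> then 1 else 0), (\<lambda>_ _. 0))"

definition mon_D :: "nat \<Rightarrow> rmon \<Rightarrow> 'a::comm_ring_1 welt" where
  "mon_D i \<mu> = ((\<lambda>_ _. 0), (\<lambda>j \<nu>. if j = i \<and> \<nu> = \<mu> then 1 else 0))"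

lemma act_mon_d: "1 \<le> i \<Longrightarrow> i \<le> m \<Longrightarrow> act m n (mon_d i \<mu>) v = lin_ext (act_d m n i \<mu>) v"
proof
  fix b' assume i: "1 \<le> i" "i \<le> m"
  have "{\<nu>. fst (mon_d i \<mu> :: 'a welt) j \<nu> \<noteq> 0} = (if j = i then {\<mu>} else {})"
    and "{\<nu>. snd (mon_d i \<mu> :: 'a welt) j \<nu> \<noteq> 0} = {}" for j
    by (auto simp: mon_d_def)
  then show "act m n (mon_d i \<mu>) v b' = lin_ext (act_d m n i \<mu>) v b'"
    unfolding act_def using i by (simp add: mon_d_def if_distrib[of "\<lambda>S. sum _ S"] cong: if_cong)
qed

lemma act_mon_D: "1 \<le> i \<Longrightarrow> i \<le> n \<Longrightarrow> act m n (mon_D i \<mu>) v = lin_ext (act_D m n i \<mu>) v"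
proof
  fix b' assume i: "1 \<le> i" "i \<le> n"
  have "{\<nu>. snd (mon_D i \<mu> :: 'a welt) j \<nu> \<noteq> 0} = (if j = i then {\<mu>} else {})"
    and "{\<nu>. fst (mon_D i \<mu> :: 'a welt) j \<nu> \<noteq> 0} = {}" for j
    by (auto simp: mon_D_def)
  then show "act m n (mon_D i \<mu>) v b' = lin_ext (act_D m n i \<mu>) v b'"
    unfolding act_def using i by (simp add: mon_D_def if_distrib[of "\<lambda>S. sum _ S"] cong: if_cong)
qed

lemma valid_W_mon_d:
  "1 \<le> i \<Longrightarrow> i \<le> m \<Longrightarrow> valid_rmon m n \<mu> \<Longrightarrow> valid_W m n (mon_d i \<mu> :: 'a::comm_ring_1 welt)"
  unfolding valid_W_def mon_d_def by (auto intro: finite_subset[of _ "{\<mu>}"])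

lemma valid_W_mon_D:
  "1 \<le> i \<Longrightarrow> i \<le> n \<Longrightarrow> valid_rmon m n \<mu> \<Longrightarrow> valid_W m n (mon_D i \<mu> :: 'a::comm_ring_1 welt)"
  unfolding valid_W_def mon_D_def by (auto intro: finite_subset[of _ "{\<mu>}"])

lemma gen_sub_act_mon_d:
  "u \<in> gen_sub m n v0 \<Longrightarrow> 1 \<le> i \<Longrightarrow> i \<le> m \<Longrightarrow> valid_rmon m n \<mu>
   \<Longrightarrow> lin_ext (act_d m n i \<mu>) u \<in> gen_sub m n v0"
  using gen_sub.action[OF _ valid_W_mon_d] by (metis act_mon_d)

lemma gen_sub_act_mon_D:
  "u \<in> gen_sub m n v0 \<Longrightarrow> 1 \<le> i \<Longrightarrow> i \<le> n \<Longrightarrow> valid_rmon m n \<mu>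
   \<Longrightarrow> lin_ext (act_D m n i \<mu>) u \<in> gen_sub m n v0"
  using gen_sub.action[OF _ valid_W_mon_D] by (metis act_mon_D)

section \<open>The generator produces every top word\<close>

lemma xi_no_letter:
  assumes "a \<notin> set w"
  shows "xi m a b w = (if a = b then sv (if a \<le> m then 1 else -1) w else (\<lambda>_. 0 :: 'a::comm_ring_1))"
proof -
  have none: "{k. k < length w \<and> w ! k = a \<and> w' = w[k := b]} = {}" for w'
    using assms by (auto simp: in_set_conv_nth)
  show ?thesis unfolding xi_def none by (auto simp: sv_def fun_eq_iff)
qed

lemma act_D_one_mon_y_mon: "act_D m n t one_mon (y_mon t, w) = sv (1::'a::comm_ring_1) (one_mon, w)"
  by (simp add: act_D_def dy_y_mon mul_mon_one_left mul_mon_one_right rterm_eq dx_one_mon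
      dy_one_mon lterm_zero tens_sv_sv)

text \<open>Let \<open>\<nu>0\<close> be \<open>y_n\<close> or \<open>1\<close> according as \<open>n \<in> S\<close>. Of the terms of
  \<open>x^(\<alpha>+\<epsilon>_1) y_(S-{n}) \<partial>_1\<close> acting on \<open>\<nu>0 \<otimes> (e*_(m+n))^q\<close> only
  \<open>\<partial>_1(x^(\<alpha>+\<epsilon>_1)) y_(S-{n}) \<nu>0 \<otimes> \<xi>(E_11) (e*_(m+n))^q\<close> survives, and \<open>E_11\<close> acts on a
  word without the letter \<open>1\<close> by the weight \<open>\<E>(E_11) = 1\<close>; so the result is a nonzero multiple
  of \<open>x^\<alpha> y_S \<otimes> (e*_(m+n))^q\<close>.\<close>
lemma act_d_raise_x1:
  fixes \<alpha> :: "nat \<Rightarrow> nat" and S :: "nat set"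
  assumes m: "1 \<le> m" and n: "1 \<le> n"
  defines "\<nu>0 \<equiv> ((\<lambda>_. 0), S \<inter> {n})" and "\<mu> \<equiv> (\<alpha>(1 := \<alpha> 1 + 1), S - {n})"
  shows "\<exists>c. c \<noteq> 0 \<and> act_d m n 1 \<mu> (\<nu>0, replicate q (m+n))
                        = tens (sv c (\<alpha>, S)) (sv (1::'a::field_char_0) (replicate q (m+n)))"
proof -
  let ?w = "replicate q (m+n)"
  have dx1: "dx 1 \<mu> = (of_nat (\<alpha> 1 + 1), (\<alpha>, S - {n}))"
    by (simp add: dx_def \<mu>_def)
  have dx_terms: "lterm (dx j \<mu>) \<nu>0 (xi m j 1 ?w) b'
      = (if j = 1 then lterm (dx 1 \<mu>) \<nu>0 (sv (1::'a) ?w) b' else 0)" if "j \<in> {1..m}" for j b'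
    using that m n by (auto simp: xi_no_letter lterm_eq tens_zero_right)
  have dy_terms: "lterm (dy j \<mu>) \<nu>0 (xi m (m + j) 1 ?w) b' = (0::'a)" if "j \<in> {1..n}" for j b'
  proof (cases "j = n")
    case True
    then have "dy j \<mu> = ((0::'a), \<mu>)" by (simp add: dy_def \<mu>_def)
    then show ?thesis by (simp add: lterm_zero)
  next
    case False
    then show ?thesis using that m by (simp add: xi_no_letter lterm_eq tens_zero_right)
  qed
  define c where "c = (of_nat (\<alpha> 1 + 1) :: 'a) * (-1) ^ card {(s,t). s \<in> S - {n} \<and> t \<in> S \<inter> {n} \<and> t < s}"
  have "(of_nat (\<alpha> 1 + 1) :: 'a) \<noteq> 0" by (simp only: of_nat_eq_0_iff)
  then have "c \<noteq> 0" by (simp add: c_def)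
  moreover have "mul_mon (\<alpha>, S - {n}) \<nu>0
      = ((-1::'a) ^ card {(s,t). s \<in> S - {n} \<and> t \<in> S \<inter> {n} \<and> t < s}, (\<alpha>, S))"
    by (auto simp: mul_mon_def \<nu>0_def)
  then have "lterm (dx 1 \<mu>) \<nu>0 (sv (1::'a) ?w) = tens (sv c (\<alpha>, S)) (sv 1 ?w)"
    by (simp only: lterm_eq dx1 fst_conv snd_conv c_def)
  moreover have "act_d m n 1 \<mu> (\<nu>0, ?w) = lterm (dx 1 \<mu>) \<nu>0 (sv (1::'a) ?w)"
    using dx_terms dy_terms m by (simp add: act_d_def \<nu>0_def dx_def rterm_zero)
  ultimately show ?thesis by auto
qed

lemma top_word_in_gen_sub:
  assumes m: "1 \<le> m" and n: "1 \<le> n" and g: "valid_rmon m n g"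
  shows "(sv 1 (g, replicate q (m+n)) :: bidx \<Rightarrow> 'a::field_char_0) \<in> gen_sub m n (vgen m n q)"
proof -
  let ?w = "replicate q (m+n)"
  let ?G = "gen_sub m n (vgen m n q) :: (bidx \<Rightarrow> 'a) set"
  obtain \<alpha> S where gS: "g = (\<alpha>, S)" by (cases g)
  have "vgen m n q \<in> ?G" by (rule gen_sub.base)
  then have y_in: "sv 1 (y_mon n, ?w) \<in> ?G" by (simp add: vgen_def y_mon_def tens_sv_sv)
  have "lin_ext (act_D m n n one_mon) (sv 1 (y_mon n, ?w)) \<in> ?G"
    by (rule gen_sub_act_mon_D[OF y_in n order_refl valid_rmon_one_mon])
  then have one_in: "sv 1 (one_mon, ?w) \<in> ?G"
    by (simp add: lin_ext_sv act_D_one_mon_y_mon)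
  define \<nu>0 where "\<nu>0 = (((\<lambda>_. 0), S \<inter> {n}) :: rmon)"
  have \<nu>0_in: "sv 1 (\<nu>0, ?w) \<in> ?G"
    using y_in one_in by (cases "n \<in> S") (auto simp: \<nu>0_def y_mon_def one_mon_def)
  define \<mu> where "\<mu> = (\<alpha>(1 := \<alpha> 1 + 1), S - {n})"
  have \<mu>: "valid_rmon m n \<mu>"
    using g m unfolding gS \<mu>_def valid_rmon_def by (auto simp: fun_upd_def)
  obtain c where c: "c \<noteq> 0" "act_d m n 1 \<mu> (\<nu>0, ?w) = tens (sv c (\<alpha>, S)) (sv (1::'a) ?w)"
    using act_d_raise_x1[OF m n] unfolding \<nu>0_def \<mu>_def by blast
  have "lin_ext (act_d m n 1 \<mu>) (sv 1 (\<nu>0, ?w)) \<in> ?G"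
    by (rule gen_sub_act_mon_d[OF \<nu>0_in order_refl m \<mu>])
  then have "(\<lambda>x. c * sv 1 (g, ?w) x) \<in> ?G"
    unfolding lin_ext_sv c(2) tens_sv_scale[of c] tens_sv_sv gS .
  then show ?thesis using gen_sub_cancel c(1) by blast
qed

section \<open>The relation ideal is stable under \<open>\<xi>(E_ab)\<close> for odd \<open>a\<close>\<close>

definition xi_sign :: "nat \<Rightarrow> nat \<Rightarrow> nat \<Rightarrow> nat \<Rightarrow> 'a::comm_ring_1" where
  "xi_sign m a b p = - ((-1) ^ ((vpar m a + vpar m b) * (vpar m a + p)))"

text \<open>\<open>\<xi>(E_ab)\<close> on a word for \<open>a \<noteq> b\<close>, as a sum over the occurrences of \<open>a\<close>; the offset \<open>p\<close>
  is the parity of letters already stripped off the front, which makes the Koszul sign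
  compatible with recursion on the word.\<close>
definition xi_off :: "nat \<Rightarrow> nat \<Rightarrow> nat \<Rightarrow> nat \<Rightarrow> nat list \<Rightarrow> nat list \<Rightarrow> 'a::comm_ring_1" where
  "xi_off m a b p w = (\<lambda>w'. \<Sum>k<length w.
     if w ! k = a then xi_sign m a b (p + (\<Sum>l<k. vpar m (w ! l))) * sv 1 (w[k := b]) w' else 0)"

definition cons_coeff :: "nat \<Rightarrow> (nat list \<Rightarrow> 'a::comm_ring_1) \<Rightarrow> nat list \<Rightarrow> 'a" where
  "cons_coeff x f = (\<lambda>w'. case w' of [] \<Rightarrow> 0 | y # u \<Rightarrow> if y = x then f u else 0)"

definition rel_word :: "nat \<Rightarrow> nat list \<Rightarrow> nat \<Rightarrow> nat \<Rightarrow> nat list \<Rightarrow> nat list \<Rightarrow> 'a::comm_ring_1" where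
  "rel_word m A c d E = (\<lambda>w'. (if w' = A @ [c, d] @ E then 1 else 0)
     + (if w' = A @ [d, c] @ E then (-1) ^ (vpar m c * vpar m d) else 0))"

definition rel_words :: "nat \<Rightarrow> nat \<Rightarrow> nat \<Rightarrow> (nat list \<Rightarrow> 'a::comm_ring_1) set" where
  "rel_words m n L = {rel_word m A c d E | A c d E.
     length A + length E + 2 = L \<and> set (A @ [c, d] @ E) \<subseteq> {1..m+n}}"

lemma vpar_cases: "vpar m x = 0 \<or> vpar m x = 1"
  by (simp add: vpar_def)

lemma vpar_top: "1 \<le> n \<Longrightarrow> vpar m (m + n) = 1"
  by (simp add: vpar_def)

lemma xi_eq_xi_off:
  assumes "a \<noteq> b"
  shows "xi m a b w = (xi_off m a b 0 w :: nat list \<Rightarrow> 'a::comm_ring_1)"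
proof
  fix w'
  have "xi_off m a b 0 w w' = (\<Sum>k\<in>{k\<in>{..<length w}. w ! k = a \<and> w' = w[k := b]}.
      xi_sign m a b (\<Sum>l<k. vpar m (w ! l)) :: 'a)"
    unfolding xi_off_def by (subst sum.inter_filter) (simp, rule sum.cong, simp, simp add: sv_def)
  also have "\<dots> = xi m a b w w'"
    unfolding xi_def using assms by (simp add: xi_sign_def)
  finally show "(xi m a b w w' :: 'a) = xi_off m a b 0 w w'" by (rule sym)
qed

lemma sv_Cons: "sv (1::'a::comm_ring_1) (x # u) = cons_coeff x (sv 1 u)"
  by (auto simp: sv_def cons_coeff_def fun_eq_iff split: list.splits)

lemma cons_coeff_sum: "cons_coeff x (\<lambda>w'. \<Sum>k\<in>K. g k w') = (\<lambda>w'. \<Sum>k\<in>K. cons_coeff x (g k) w')"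
  by (auto simp: cons_coeff_def fun_eq_iff split: list.splits)

lemma cons_coeff_if:
  "cons_coeff x (\<lambda>w'. if P then c * g w' else 0) = (\<lambda>w'. if P then c * cons_coeff x g w' else 0)"
  by (auto simp: cons_coeff_def fun_eq_iff split: list.splits)

lemma cons_coeff_add: "cons_coeff x (\<lambda>w'. f w' + g w') = (\<lambda>w'. cons_coeff x f w' + cons_coeff x g w')"
  by (auto simp: cons_coeff_def fun_eq_iff split: list.splits)

lemma cons_coeff_smul: "cons_coeff x (\<lambda>w'. c * f w') = (\<lambda>w'. c * cons_coeff x f w')"
  by (auto simp: cons_coeff_def fun_eq_iff split: list.splits)

lemma cons_coeff_zero: "cons_coeff x (\<lambda>w'. 0) = (\<lambda>w'. 0)"
  by (auto simp: cons_coeff_def fun_eq_iff split: list.splits)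

lemma xi_off_Cons:
  "xi_off m a b p (x # w) = (\<lambda>w'. (if x = a then xi_sign m a b p * sv 1 (b # w) w' else 0)
     + cons_coeff x (xi_off m a b (p + vpar m x) w) w' :: 'a::comm_ring_1)"
proof
  fix w'
  have prefix: "(\<Sum>l<Suc k. vpar m ((x # w) ! l)) = vpar m x + (\<Sum>l<k. vpar m (w ! l))" for k
    by (subst sum.lessThan_Suc_shift) simp
  have "(xi_off m a b p (x # w) w' :: 'a) = (if x = a then xi_sign m a b p * sv 1 (b # w) w' else 0)
     + (\<Sum>k<length w. if w ! k = a
          then xi_sign m a b (p + (vpar m x + (\<Sum>l<k. vpar m (w ! l)))) * sv 1 (x # w[k := b]) w'
          else 0)"
    unfolding xi_off_def length_Cons
    by (subst sum.lessThan_Suc_shift)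
      (simp only: prefix nth_Cons_0 nth_Cons_Suc list_update_code lessThan_0 sum.empty add_0_right)
  also have "\<dots> = (if x = a then xi_sign m a b p * sv 1 (b # w) w' else 0)
     + cons_coeff x (xi_off m a b (p + vpar m x) w) w'"
    unfolding xi_off_def sv_Cons cons_coeff_sum cons_coeff_if by (simp add: ac_simps cong: if_cong)
  finally show "xi_off m a b p (x # w) w' = \<dots>" .
qed

lemma rel_word_sv:
  "rel_word m A c d E = (\<lambda>w'. sv 1 (A @ c # d # E) w'
     + (-1) ^ (vpar m c * vpar m d) * sv (1::'a::comm_ring_1) (A @ d # c # E) w')"
  by (auto simp: rel_word_def sv_def fun_eq_iff)

lemma rel_wordsI:
  "length A + length E + 2 = L \<Longrightarrow> set (A @ [c, d] @ E) \<subseteq> {1..m+n} \<Longrightarrow> rel_word m A c d E \<in> rel_words m n L"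
  unfolding rel_words_def by blast

lemma lspan_rel_word:
  "length A + length E + 2 = L \<Longrightarrow> set (A @ [c, d] @ E) \<subseteq> {1..m+n}
   \<Longrightarrow> (\<lambda>w'. k * rel_word m A c d E w') \<in> lspan (rel_words m n L)"
  by (intro lspan_smul lspan_base rel_wordsI)

lemma cons_coeff_rel_word:
  "cons_coeff x (rel_word m A c d E) = (rel_word m (x # A) c d E :: nat list \<Rightarrow> 'a::comm_ring_1)"
  by (simp add: rel_word_sv cons_coeff_add cons_coeff_smul sv_Cons)

lemma cons_coeff_lspan:
  "f \<in> lspan (rel_words m n L) \<Longrightarrow> x \<in> {1..m+n} \<Longrightarrow> cons_coeff x f \<in> lspan (rel_words m n (Suc L))"
proof (induction f rule: lspan.induct)
  case zero then show ?case by (simp add: cons_coeff_zero lspan.zero)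
next
  case (comb v y c)
  from comb.hyps(1) obtain A c' d E where v: "v = rel_word m A c' d E"
    and AE: "length A + length E + 2 = L" "set (A @ [c', d] @ E) \<subseteq> {1..m+n}"
    unfolding rel_words_def by blast
  have "cons_coeff x v \<in> rel_words m n (Suc L)"
    unfolding v cons_coeff_rel_word by (rule rel_wordsI) (use AE comb.prems in auto)
  then show ?case
    unfolding cons_coeff_add cons_coeff_smul using lspan.comb comb.IH comb.prems by blast
qed

lemma xi_off_swap_tail:
  assumes c: "c \<in> {1..m+n}" and d: "d \<in> {1..m+n}" and E: "set E \<subseteq> {1..m+n}" and b: "b \<in> {1..m+n}"
  shows "(\<lambda>w'. cons_coeff c (cons_coeff d (xi_off m a b p E)) w'
            + (-1) ^ (vpar m c * vpar m d) * cons_coeff d (cons_coeff c (xi_off m a b p E)) w')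
     \<in> lspan (rel_words m n (length E + 2) :: (nat list \<Rightarrow> 'a::comm_ring_1) set)"
proof -
  let ?s = "\<lambda>k. xi_sign m a b (p + (\<Sum>l<k. vpar m (E ! l))) :: 'a"
  have cc: "cons_coeff x (cons_coeff y (xi_off m a b p E))
      = (\<lambda>w'. \<Sum>k<length E. if E ! k = a then ?s k * sv 1 (x # y # E[k := b]) w' else 0)" for x y
    unfolding xi_off_def cons_coeff_sum cons_coeff_if sv_Cons ..
  have "(\<lambda>w'. cons_coeff c (cons_coeff d (xi_off m a b p E)) w'
            + (-1) ^ (vpar m c * vpar m d) * cons_coeff d (cons_coeff c (xi_off m a b p E)) w')
      = (\<lambda>w'. \<Sum>k<length E. if E ! k = a then ?s k * rel_word m [] c d (E[k := b]) w' else 0)"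
    unfolding cc rel_word_sv
    by (auto simp: fun_eq_iff sum_distrib_left sum.distrib[symmetric] algebra_simps intro!: sum.cong)
  also have "\<dots> \<in> lspan (rel_words m n (length E + 2))"
  proof (rule lspan_sum[OF finite_lessThan])
    fix k assume "k \<in> {..<length E}"
    then have "(\<lambda>w'. ?s k * rel_word m [] c d (E[k := b]) w') \<in> lspan (rel_words m n (length E + 2))"
      using c d E b set_update_subset_insert[of E k b] by (intro lspan_rel_word) auto
    then show "(\<lambda>w'. if E ! k = a then ?s k * rel_word m [] c d (E[k := b]) w' else 0)
        \<in> lspan (rel_words m n (length E + 2))"
      by (cases "E ! k = a") (simp_all add: lspan.zero)
  qed
  finally show ?thesis .
qed

text \<open>The front case of the stability of the relations; this is where \<open>a\<close> odd is needed, for the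
  Koszul signs picked up when \<open>\<xi>(E_ab)\<close> passes \<open>c\<close> and \<open>d\<close> to match.\<close>
lemma xi_off_rel_word_front:
  assumes va: "vpar m a = 1" and c: "c \<in> {1..m+n}" and d: "d \<in> {1..m+n}" and E: "set E \<subseteq> {1..m+n}"
    and b: "b \<in> {1..m+n}"
  shows "(\<lambda>w'. xi_off m a b p (c # d # E) w' + (-1) ^ (vpar m c * vpar m d) * xi_off m a b p (d # c # E) w')
     \<in> lspan (rel_words m n (length E + 2) :: (nat list \<Rightarrow> 'a::comm_ring_1) set)"
proof -
  let ?F = "xi_off m a b (p + vpar m c + vpar m d) E :: nat list \<Rightarrow> 'a"
  let ?e = "(-1::'a) ^ (vpar m c * vpar m d)"
  let ?\<sigma> = "xi_sign m a b p :: 'a"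
  have cd: "xi_off m a b p (c # d # E) = (\<lambda>w'. (if c = a then ?\<sigma> * sv 1 (b # d # E) w' else 0)
     + ((if d = a then xi_sign m a b (p + vpar m c) * sv 1 (c # b # E) w' else 0)
        + cons_coeff c (cons_coeff d ?F) w'))"
    by (simp add: xi_off_Cons cons_coeff_add cons_coeff_if sv_Cons[symmetric] cong: if_cong)
  have parity: "p + vpar m d + vpar m c = p + vpar m c + vpar m d" by simp
  have dc: "xi_off m a b p (d # c # E) = (\<lambda>w'. (if d = a then ?\<sigma> * sv 1 (b # c # E) w' else 0)
     + ((if c = a then xi_sign m a b (p + vpar m d) * sv 1 (d # b # E) w' else 0)
        + cons_coeff d (cons_coeff c ?F) w'))"
    by (simp add: xi_off_Cons cons_coeff_add cons_coeff_if sv_Cons[symmetric] parity cong: if_cong)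
  have "(\<lambda>w'. xi_off m a b p (c # d # E) w' + ?e * xi_off m a b p (d # c # E) w')
    = (\<lambda>w'. (if c = a then ?\<sigma> * rel_word m [] b d E w' else 0)
       + ((if d = a then ?e * ?\<sigma> * rel_word m [] b c E w' else 0)
       + (cons_coeff c (cons_coeff d ?F) w' + ?e * cons_coeff d (cons_coeff c ?F) w')))"
    unfolding cd dc rel_word_sv using vpar_cases[of m b] vpar_cases[of m c] vpar_cases[of m d]
    by (cases "c = a"; cases "d = a")
      (auto simp: fun_eq_iff xi_sign_def minus_one_power_iff va algebra_simps)
  also have "\<dots> \<in> lspan (rel_words m n (length E + 2))"
  proof (rule lspan_add[OF _ lspan_add])
    show "(\<lambda>w'. if c = a then ?\<sigma> * rel_word m [] b d E w' else 0) \<in> lspan (rel_words m n (length E + 2))"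
      using b d E by (cases "c = a") (simp_all add: lspan.zero lspan_rel_word)
    show "(\<lambda>w'. if d = a then ?e * ?\<sigma> * rel_word m [] b c E w' else 0) \<in> lspan (rel_words m n (length E + 2))"
      using b c E by (cases "d = a") (simp_all add: lspan.zero lspan_rel_word mult.assoc[symmetric])
    show "(\<lambda>w'. cons_coeff c (cons_coeff d ?F) w' + ?e * cons_coeff d (cons_coeff c ?F) w')
        \<in> lspan (rel_words m n (length E + 2))"
      by (rule xi_off_swap_tail[OF c d E b])
  qed
  finally show ?thesis .
qed

lemma xi_off_rel_word:
  assumes va: "vpar m a = 1" and L: "set (A @ [c, d] @ E) \<subseteq> {1..m+n}" and b: "b \<in> {1..m+n}"
  shows "(\<lambda>w'. xi_off m a b p (A @ c # d # E) w'
            + (-1) ^ (vpar m c * vpar m d) * xi_off m a b p (A @ d # c # E) w')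
     \<in> lspan (rel_words m n (length A + length E + 2) :: (nat list \<Rightarrow> 'a::comm_ring_1) set)"
  using L
proof (induction A arbitrary: p)
  case Nil
  then show ?case using xi_off_rel_word_front[OF va _ _ _ b, of c d E p] by simp
next
  case (Cons x A)
  let ?e = "(-1::'a) ^ (vpar m c * vpar m d)"
  let ?G = "\<lambda>w'. xi_off m a b (p + vpar m x) (A @ c # d # E) w'
                + ?e * xi_off m a b (p + vpar m x) (A @ d # c # E) w'"
  have x: "x \<in> {1..m+n}" and L': "set (A @ [c, d] @ E) \<subseteq> {1..m+n}" using Cons.prems by auto
  have "(\<lambda>w'. xi_off m a b p ((x # A) @ c # d # E) w' + ?e * xi_off m a b p ((x # A) @ d # c # E) w')
    = (\<lambda>w'. (if x = a then xi_sign m a b p * rel_word m (b # A) c d E w' else 0) + cons_coeff x ?G w')"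
    by (auto simp: xi_off_Cons cons_coeff_add cons_coeff_smul rel_word_sv algebra_simps fun_eq_iff)
  also have "\<dots> \<in> lspan (rel_words m n (length (x # A) + length E + 2))"
  proof (rule lspan_add)
    show "(\<lambda>w'. if x = a then xi_sign m a b p * rel_word m (b # A) c d E w' else 0)
        \<in> lspan (rel_words m n (length (x # A) + length E + 2))"
      using b L' by (cases "x = a") (simp_all add: lspan.zero lspan_rel_word)
    show "cons_coeff x ?G \<in> lspan (rel_words m n (length (x # A) + length E + 2))"
      using cons_coeff_lspan[OF Cons.IH[OF L'] x] by simp
  qed
  finally show ?case .
qed

section \<open>The fields \<open>y_n \<partial>_b\<close> preserve the relations\<close>

definition y_field :: "nat \<Rightarrow> nat \<Rightarrow> nat \<Rightarrow> 'a::comm_ring_1 welt" where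
  "y_field m n b = (if b \<le> m then mon_d b (y_mon n) else mon_D (b - m) (y_mon n))"

definition deriv_by :: "nat \<Rightarrow> nat \<Rightarrow> rmon \<Rightarrow> 'a::comm_ring_1 \<times> rmon" where
  "deriv_by m b \<nu> = (if b \<le> m then dx b \<nu> else dy (b - m) \<nu>)"

definition y_field_sign :: "nat \<Rightarrow> nat \<Rightarrow> rmon \<Rightarrow> 'a::comm_ring_1" where
  "y_field_sign m b \<nu> = (if b \<le> m then (-1) ^ rpar \<nu> else 1)"

definition y_field_mat :: "nat \<Rightarrow> nat \<Rightarrow> nat \<Rightarrow> bidx \<Rightarrow> bidx \<Rightarrow> 'a::comm_ring_1" where
  "y_field_mat m n b = (\<lambda>(\<nu>, w) b'. rterm (y_mon n) (deriv_by m b \<nu>) (sv 1 w) b'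
     + y_field_sign m b \<nu> * tens (sv 1 \<nu>) (xi m (m + n) b w) b')"

lemma sum_dy_y_mon:
  assumes "1 \<le> n"
  shows "(\<Sum>j\<in>{1..n}. lterm (dy j (y_mon n)) \<nu> (f j) b') = (tens (sv 1 \<nu>) (f n) b' :: 'a::comm_ring_1)"
proof -
  have "(\<Sum>j\<in>{1..n}. lterm (dy j (y_mon n)) \<nu> (f j) b')
      = (\<Sum>j\<in>{1..n}. if j = n then tens (sv 1 \<nu>) (f n) b' else (0::'a))"
    by (rule sum.cong) (auto simp: dy_y_mon lterm_zero lterm_eq mul_mon_one_left tens_zero_left)
  then show ?thesis using assms by simp
qed

lemma sum_dx_y_mon: "(\<Sum>j\<in>{1..m}. lterm (dx j (y_mon n)) \<nu> (f j) b') = (0::'a::comm_ring_1)"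
  by (simp add: dx_y_mon lterm_zero)

lemma act_d_y_mon:
  assumes "1 \<le> n"
  shows "act_d m n b (y_mon n) (\<nu>, w) = (\<lambda>b'. rterm (y_mon n) (dx b \<nu>) (sv 1 w) b'
           + (-1) ^ rpar \<nu> * tens (sv 1 \<nu>) (xi m (m + n) b w) b' :: 'a::comm_ring_1)"
  unfolding act_d_def prod.case sum_dx_y_mon sum_dy_y_mon[OF assms]
  by (simp add: rpar_y_mon)

lemma act_D_y_mon:
  assumes "1 \<le> n"
  shows "act_D m n j (y_mon n) (\<nu>, w) = (\<lambda>b'. rterm (y_mon n) (dy j \<nu>) (sv 1 w) b'
           + tens (sv 1 \<nu>) (xi m (m + n) (m + j) w) b' :: 'a::comm_ring_1)"
  unfolding act_D_def prod.case sum_dx_y_mon sum_dy_y_mon[OF assms]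
  by (simp add: rpar_y_mon)

lemma act_y_field:
  assumes "1 \<le> b" "b < m + n" "1 \<le> n"
  shows "act m n (y_field m n b) v = lin_ext (y_field_mat m n b :: bidx \<Rightarrow> bidx \<Rightarrow> 'a::comm_ring_1) v"
proof (cases "b \<le> m")
  case True
  have "act_d m n b (y_mon n) = (y_field_mat m n b :: bidx \<Rightarrow> bidx \<Rightarrow> 'a)"
    using assms True by (auto simp: fun_eq_iff y_field_mat_def act_d_y_mon deriv_by_def y_field_sign_def)
  then show ?thesis using True assms by (simp add: y_field_def act_mon_d)
next
  case False
  have "act_D m n (b - m) (y_mon n) = (y_field_mat m n b :: bidx \<Rightarrow> bidx \<Rightarrow> 'a)"
    using assms False by (auto simp: fun_eq_iff y_field_mat_def act_D_y_mon deriv_by_def y_field_sign_def)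
  then show ?thesis using False assms by (simp add: y_field_def act_mon_D)
qed

lemma valid_W_y_field:
  assumes "1 \<le> b" "b < m + n" "1 \<le> n"
  shows "valid_W m n (y_field m n b :: 'a::comm_ring_1 welt)"
proof -
  have "valid_rmon m n (y_mon n)" using assms(3) by (simp add: valid_rmon_y_mon)
  then show ?thesis using assms by (auto simp: y_field_def intro: valid_W_mon_d valid_W_mon_D)
qed

lemma valid_rmon_deriv_by: "valid_rmon m n \<nu> \<Longrightarrow> valid_rmon m n (snd (deriv_by m b \<nu>))"
  by (simp add: deriv_by_def valid_rmon_dx valid_rmon_dy)

lemma rterm_y_mon_deriv_by:
  assumes n: "1 \<le> n" and \<nu>: "valid_rmon m n \<nu>"
  obtains C \<rho> where "valid_rmon m n \<rho>"
    and "\<And>t. rterm (y_mon n) (deriv_by m b \<nu>) t = (\<lambda>x. C * tens (sv 1 \<rho>) t x :: 'a::comm_ring_1)"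
proof
  let ?M = "mul_mon (y_mon n) (snd (deriv_by m b \<nu> :: 'a \<times> rmon)) :: 'a \<times> rmon"
  show "valid_rmon m n (snd ?M)"
    by (intro valid_rmon_mul_mon valid_rmon_y_mon[OF n order_refl] valid_rmon_deriv_by \<nu>)
  show "rterm (y_mon n) (deriv_by m b \<nu>) t
      = (\<lambda>x. (fst (deriv_by m b \<nu> :: 'a \<times> rmon) * fst ?M) * tens (sv 1 (snd ?M)) t x)" for t
    by (simp add: rterm_eq tens_sv_scale[symmetric])
qed

definition xi_lin :: "nat \<Rightarrow> nat \<Rightarrow> nat \<Rightarrow> (nat list \<Rightarrow> 'a::comm_ring_1) \<Rightarrow> nat list \<Rightarrow> 'a" where
  "xi_lin m n b f = (\<lambda>w'. \<Sum>w\<in>{w. f w \<noteq> 0}. f w * xi m (m + n) b w w')"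

lemma lin_ext_y_field_mat_tens:
  assumes n: "1 \<le> n" and \<nu>: "valid_rmon m n \<nu>" and f: "fin_supp f"
  obtains C \<rho> where "valid_rmon m n \<rho>"
    and "lin_ext (y_field_mat m n b) (tens (sv 1 \<nu>) f)
       = (\<lambda>x. C * tens (sv 1 \<rho>) f x + y_field_sign m b \<nu> * tens (sv 1 \<nu>) (xi_lin m n b f) x :: 'a::comm_ring_1)"
proof -
  obtain C \<rho> where \<rho>: "valid_rmon m n \<rho>"
    and C: "\<And>t. rterm (y_mon n) (deriv_by m b \<nu>) t = (\<lambda>x. C * tens (sv 1 \<rho>) t x :: 'a)"
    using rterm_y_mon_deriv_by[OF n \<nu>] by blast
  have "lin_ext (y_field_mat m n b) (tens (sv 1 \<nu>) f) x
      = C * tens (sv 1 \<rho>) f x + y_field_sign m b \<nu> * tens (sv 1 \<nu>) (xi_lin m n b f) x" for x :: bidx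
  proof -
    obtain \<rho>' w' where x: "x = (\<rho>', w')" by (cases x)
    let ?S = "{w. f w \<noteq> 0}"
    have "lin_ext (y_field_mat m n b) (tens (sv 1 \<nu>) f) x = (\<Sum>w\<in>?S. f w * y_field_mat m n b (\<nu>, w) x)"
      by (rule lin_ext_tens[OF f])
    also have "\<dots> = (\<Sum>w\<in>?S. (C * sv 1 \<rho> \<rho>') * (f w * sv 1 w w')
        + (y_field_sign m b \<nu> * sv 1 \<nu> \<rho>') * (f w * xi m (m + n) b w w'))"
      by (rule sum.cong) (simp_all add: y_field_mat_def C x tens_def algebra_simps)
    also have "\<dots> = (C * sv 1 \<rho> \<rho>') * (\<Sum>w\<in>?S. f w * sv 1 w w')
        + (y_field_sign m b \<nu> * sv 1 \<nu> \<rho>') * (\<Sum>w\<in>?S. f w * xi m (m + n) b w w')"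
      by (simp add: sum.distrib sum_distrib_left)
    also have "\<dots> = C * tens (sv 1 \<rho>) f x + y_field_sign m b \<nu> * tens (sv 1 \<nu>) (xi_lin m n b f) x"
      by (simp add: fin_supp_expansion[OF f] x tens_def xi_lin_def algebra_simps)
    finally show ?thesis .
  qed
  with \<rho> show ?thesis by (intro that) auto
qed

lemma Krel_eq:
  "Krel m n q = {tens (sv 1 \<nu>) (rel_word m A c d E) | \<nu> A c d E.
     valid_rmon m n \<nu> \<and> length A + length E + 2 = q \<and> set (A @ [c, d] @ E) \<subseteq> {1..m+n}}"
  by (simp add: Krel_def rel_word_def)

lemma KrelI:
  "valid_rmon m n \<nu> \<Longrightarrow> length A + length E + 2 = q \<Longrightarrow> set (A @ [c, d] @ E) \<subseteq> {1..m+n}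
   \<Longrightarrow> tens (sv 1 \<nu>) (rel_word m A c d E) \<in> Krel m n q"
  unfolding Krel_eq by blast

lemma tens_lspan_Krel:
  "f \<in> lspan (rel_words m n q) \<Longrightarrow> valid_rmon m n \<nu>
   \<Longrightarrow> tens (sv 1 \<nu>) f \<in> lspan (Krel m n q :: (bidx \<Rightarrow> 'a::comm_ring_1) set)"
proof (induction f rule: lspan.induct)
  case zero then show ?case by (simp add: tens_zero_right lspan.zero)
next
  case (comb v x c)
  from comb.hyps(1) obtain A c' d E where v: "v = rel_word m A c' d E"
    and AE: "length A + length E + 2 = q" "set (A @ [c', d] @ E) \<subseteq> {1..m+n}"
    unfolding rel_words_def by blast
  have "tens (sv 1 \<nu>) v \<in> Krel m n q" unfolding v by (rule KrelI) (use AE comb.prems in auto)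
  then show ?case unfolding tens_add tens_smul by (rule lspan.comb[OF _ comb.IH[OF comb.prems]])
qed

lemma rel_word_nonzero:
  "rel_word m A c d E w \<noteq> (0::'a::comm_ring_1) \<Longrightarrow> w = A @ [c, d] @ E \<or> w = A @ [d, c] @ E"
  by (auto simp: rel_word_def split: if_splits)

lemma fin_supp_rel_word: "fin_supp (rel_word m A c d E :: nat list \<Rightarrow> 'a::comm_ring_1)"
  unfolding fin_supp_def
  by (rule finite_subset[of _ "{A @ [c, d] @ E, A @ [d, c] @ E}"]) (auto dest: rel_word_nonzero)

lemma fin_supp_Krel: "k \<in> Krel m n q \<Longrightarrow> fin_supp k"
  unfolding Krel_eq using fin_supp_tens[OF fin_supp_rel_word] by blast

lemma xi_lin_superset:
  "finite S \<Longrightarrow> {w. f w \<noteq> 0} \<subseteq> S \<Longrightarrow> xi_lin m n b f w' = (\<Sum>w\<in>S. f w * xi m (m + n) b w w')"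
  unfolding xi_lin_def by (rule sum.mono_neutral_left) auto

lemma xi_lin_rel_word:
  "xi_lin m n b (rel_word m A c d E) = (\<lambda>w'. xi m (m + n) b (A @ c # d # E) w'
     + (-1) ^ (vpar m c * vpar m d) * xi m (m + n) b (A @ d # c # E) w' :: 'a::comm_ring_1)"
proof
  fix w'
  let ?w1 = "A @ c # d # E" and ?w2 = "A @ d # c # E"
  let ?e = "(-1::'a) ^ (vpar m c * vpar m d)"
  have sub: "{w. rel_word m A c d E w \<noteq> (0::'a)} \<subseteq> {?w1, ?w2}"
    using rel_word_nonzero by fastforce
  show "xi_lin m n b (rel_word m A c d E) w' = xi m (m + n) b ?w1 w' + ?e * xi m (m + n) b ?w2 w'"
  proof (cases "c = d")
    case True
    have "xi_lin m n b (rel_word m A c d E) w' = (\<Sum>w\<in>{?w1}. rel_word m A c d E w * xi m (m + n) b w w' :: 'a)"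
      by (rule xi_lin_superset) (use sub True in auto)
    then show ?thesis using True by (simp add: rel_word_def algebra_simps)
  next
    case False
    then have "?w1 \<noteq> ?w2" by simp
    moreover have "xi_lin m n b (rel_word m A c d E) w'
        = (\<Sum>w\<in>{?w1, ?w2}. rel_word m A c d E w * xi m (m + n) b w w' :: 'a)"
      by (rule xi_lin_superset) (use sub in auto)
    ultimately show ?thesis by (simp add: rel_word_def)
  qed
qed

lemma y_field_mat_Krel:
  assumes n: "1 \<le> n" and b: "1 \<le> b" "b < m + n" and \<kappa>: "\<kappa> \<in> Krel m n q"
  shows "lin_ext (y_field_mat m n b) \<kappa> \<in> lspan (Krel m n q :: (bidx \<Rightarrow> 'a::comm_ring_1) set)"
proof -
  obtain \<nu> A c d E where \<kappa>_eq: "\<kappa> = tens (sv 1 \<nu>) (rel_word m A c d E)" and \<nu>: "valid_rmon m n \<nu>"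
    and q: "length A + length E + 2 = q" and AE: "set (A @ [c, d] @ E) \<subseteq> {1..m+n}"
    using \<kappa> unfolding Krel_eq by blast
  obtain C \<rho> where \<rho>: "valid_rmon m n \<rho>"
    and img: "lin_ext (y_field_mat m n b) \<kappa> = (\<lambda>x. C * tens (sv 1 \<rho>) (rel_word m A c d E) x
       + y_field_sign m b \<nu> * tens (sv 1 \<nu>) (xi_lin m n b (rel_word m A c d E)) x :: 'a)"
    using lin_ext_y_field_mat_tens[OF n \<nu> fin_supp_rel_word] unfolding \<kappa>_eq by blast
  have "xi_lin m n b (rel_word m A c d E) = (\<lambda>w'. xi_off m (m + n) b 0 (A @ c # d # E) w'
      + (-1) ^ (vpar m c * vpar m d) * xi_off m (m + n) b 0 (A @ d # c # E) w' :: 'a)"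
    using b by (simp add: xi_lin_rel_word xi_eq_xi_off)
  also have "\<dots> \<in> lspan (rel_words m n q)"
    using xi_off_rel_word[OF vpar_top[OF n] AE, of b 0] b q by simp
  finally have "tens (sv 1 \<nu>) (xi_lin m n b (rel_word m A c d E)) \<in> lspan (Krel m n q :: (bidx \<Rightarrow> 'a) set)"
    by (rule tens_lspan_Krel[OF _ \<nu>])
  moreover have "tens (sv 1 \<rho>) (rel_word m A c d E) \<in> lspan (Krel m n q :: (bidx \<Rightarrow> 'a) set)"
    by (rule lspan_base, rule KrelI[OF \<rho> q AE])
  ultimately show ?thesis unfolding img by (intro lspan_add lspan_smul)
qed

lemma gen_mod_rel_act_y_field:
  assumes v: "v \<in> gen_mod_rel m n q" and fv: "fin_supp v" and n: "1 \<le> n" and b: "1 \<le> b" "b < m + n"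
  shows "act m n (y_field m n b) v \<in> gen_mod_rel m n q"
proof -
  obtain u k where u: "u \<in> gen_sub m n (vgen m n q)" and k: "k \<in> lspan (Krel m n q)"
    and v_eq: "v = (\<lambda>x. u x + k x)"
    using v by (rule gen_mod_relE)
  have fk: "fin_supp k" by (rule lspan_fin_supp[OF k fin_supp_Krel])
  have "u = (\<lambda>x. v x - k x)" using v_eq by auto
  then have fu: "fin_supp u" using fin_supp_diff[OF fv fk] by simp
  have "act m n (y_field m n b) v = (\<lambda>y. lin_ext (y_field_mat m n b) u y + lin_ext (y_field_mat m n b) k y)"
    unfolding act_y_field[OF b n] v_eq by (rule lin_ext_add[OF fu fk])
  also have "\<dots> = (\<lambda>y. act m n (y_field m n b) u y + lin_ext (y_field_mat m n b) k y)"
    by (simp add: act_y_field[OF b n])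
  also have "\<dots> \<in> gen_mod_rel m n q"
  proof (rule gen_mod_rel_add)
    show "act m n (y_field m n b) u \<in> gen_mod_rel m n q"
      by (rule gen_mod_rel_gen_sub[OF gen_sub.action[OF u valid_W_y_field[OF b n]]])
    show "lin_ext (y_field_mat m n b) k \<in> gen_mod_rel m n q"
      by (rule gen_mod_rel_lspan[OF lin_ext_lspan[OF fin_supp_Krel y_field_mat_Krel[OF n b] k]])
  qed
  finally show ?thesis .
qed

section \<open>Lowering the power of the top letter\<close>

lemma replicate_update:
  "k < r \<Longrightarrow> (replicate r x)[k := y] = replicate k x @ y # replicate (r - 1 - k) x"
proof (induction k arbitrary: r)
  case 0 then show ?case by (cases r) auto
next
  case (Suc k) then show ?case by (cases r) auto
qed

lemma swap_in_Krel:
  assumes "valid_rmon m n \<nu>" and "length A + length E + 2 = q" and "set (A @ [c, d] @ E) \<subseteq> {1..m+n}"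
  shows "(\<lambda>x. sv 1 (\<nu>, A @ c # d # E) x + (-1) ^ (vpar m c * vpar m d) * sv 1 (\<nu>, A @ d # c # E) x)
           \<in> (Krel m n q :: (bidx \<Rightarrow> 'a::comm_ring_1) set)"
  using KrelI[OF assms, where 'a='a]
  unfolding rel_word_sv tens_add tens_smul tens_sv_sv .

lemma move_past_top_letters:
  assumes \<nu>: "valid_rmon m n \<nu>" and b: "b \<in> {1..m+n}" and s: "set s \<subseteq> {1..m+n}" and n: "1 \<le> n"
  shows "k + 1 + j + length s = q \<Longrightarrow>
    (\<lambda>x. sv 1 (\<nu>, replicate k (m+n) @ b # replicate j (m+n) @ s) x
       - (- ((-1) ^ (vpar m b * vpar m (m+n)))) ^ j * sv 1 (\<nu>, replicate (k + j) (m+n) @ b # s) x)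
     \<in> lspan (Krel m n q :: (bidx \<Rightarrow> 'a::comm_ring_1) set)"
proof (induction j arbitrary: k)
  case 0 then show ?case by (simp add: lspan.zero)
next
  case (Suc j)
  let ?T = "m + n"
  let ?\<sigma> = "(-1::'a) ^ (vpar m b * vpar m ?T)"
  let ?X = "sv 1 (\<nu>, replicate k ?T @ b # ?T # replicate j ?T @ s) :: bidx \<Rightarrow> 'a"
  let ?Y = "sv 1 (\<nu>, replicate (Suc k) ?T @ b # replicate j ?T @ s) :: bidx \<Rightarrow> 'a"
  let ?Z = "sv 1 (\<nu>, replicate (Suc k + j) ?T @ b # s) :: bidx \<Rightarrow> 'a"
  have shift:
    "replicate k ?T @ ?T # b # (replicate j ?T @ s) = replicate (Suc k) ?T @ b # replicate j ?T @ s"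
    by (simp add: replicate_append_same[symmetric])
  have "(\<lambda>x. sv 1 (\<nu>, replicate k ?T @ b # ?T # (replicate j ?T @ s)) x
      + ?\<sigma> * sv 1 (\<nu>, replicate k ?T @ ?T # b # (replicate j ?T @ s)) x) \<in> Krel m n q"
    by (rule swap_in_Krel[OF \<nu>]) (use Suc.prems b s n in auto)
  then have swap: "(\<lambda>x. ?X x + ?\<sigma> * ?Y x) \<in> Krel m n q" by (simp only: shift)
  have "(\<lambda>x. ?Y x - (- ?\<sigma>) ^ j * ?Z x) \<in> lspan (Krel m n q)"
    using Suc.IH[of "Suc k"] Suc.prems by simp
  then have "(\<lambda>x. (?X x + ?\<sigma> * ?Y x) + (- ?\<sigma>) * (?Y x - (- ?\<sigma>) ^ j * ?Z x)) \<in> lspan (Krel m n q)"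
    by (rule lspan_add[OF lspan_base[OF swap] lspan_smul])
  then show ?case by (simp add: algebra_simps)
qed

text \<open>Once \<open>b\<close> is moved to position \<open>r - 1\<close>, the sign of the head term with \<open>b\<close> at position
  \<open>k\<close> does not depend on \<open>k\<close>: the head terms add up to \<open>r\<close> copies of one word instead of
  cancelling.\<close>
lemma xi_sign_top_shift:
  assumes n: "1 \<le> n" and k: "k < r"
  shows "xi_sign m (m + n) b k * (- ((-1::'a::comm_ring_1) ^ (vpar m b * vpar m (m + n)))) ^ (r - 1 - k)
       = - ((-1) ^ ((1 + vpar m b) * r))"
proof -
  obtain j where j: "r = k + 1 + j" using k by (metis add.commute add_Suc less_imp_Suc_add plus_1_eq_Suc)
  have "(-1::'a) ^ (1 + k) * (-1) ^ j = (-1) ^ (k + 1 + j)" by (simp add: power_add[symmetric])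
  moreover have "(-1::'a) ^ (2 * x) = 1" for x by (simp add: power_mult)
  ultimately show ?thesis
    using vpar_cases[of m b] by (auto simp: xi_sign_def vpar_top[OF n] j)
qed

lemma tens_xi_off:
  "tens (sv 1 \<nu>) (xi_off m a b p w) = (\<lambda>x. \<Sum>k<length w.
     if w ! k = a then xi_sign m a b (p + (\<Sum>l<k. vpar m (w ! l))) * sv 1 (\<nu>, w[k := b]) x
     else (0::'a::comm_ring_1))"
proof
  fix x :: bidx
  obtain \<rho> w' where x: "x = (\<rho>, w')" by (cases x)
  show "tens (sv 1 \<nu>) (xi_off m a b p w) x = (\<Sum>k<length w. if w ! k = a
      then xi_sign m a b (p + (\<Sum>l<k. vpar m (w ! l))) * sv 1 (\<nu>, w[k := b]) x else (0::'a))"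
    unfolding x tens_def xi_off_def by (simp add: sum_distrib_left sv_def cong: if_cong)
qed

lemma tens_xi_top_in_gen_mod_rel:
  assumes n: "1 \<le> n" and b: "1 \<le> b" "b < m + n" and \<nu>: "valid_rmon m n \<nu>"
    and W: "\<And>\<nu>'. valid_rmon m n \<nu>' \<Longrightarrow> (sv 1 (\<nu>', w) :: bidx \<Rightarrow> 'a::field) \<in> gen_mod_rel m n q"
  shows "(tens (sv 1 \<nu>) (xi m (m + n) b w) :: bidx \<Rightarrow> 'a) \<in> gen_mod_rel m n q"
proof -
  let ?X = "tens (sv 1 \<nu>) (xi m (m + n) b w) :: bidx \<Rightarrow> 'a"
  obtain C \<rho> where \<rho>: "valid_rmon m n \<rho>"
    and C: "\<And>t. rterm (y_mon n) (deriv_by m b \<nu>) t = (\<lambda>x. C * tens (sv 1 \<rho>) t x :: 'a)"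
    using rterm_y_mon_deriv_by[OF n \<nu>] by blast
  have "act m n (y_field m n b) (sv 1 (\<nu>, w) :: bidx \<Rightarrow> 'a) \<in> gen_mod_rel m n q"
    using gen_mod_rel_act_y_field[OF W[OF \<nu>] fin_supp_sv n b] .
  moreover have "act m n (y_field m n b) (sv 1 (\<nu>, w) :: bidx \<Rightarrow> 'a)
      = (\<lambda>x. C * sv 1 (\<rho>, w) x + y_field_sign m b \<nu> * ?X x)"
    by (simp add: act_y_field[OF b n] lin_ext_sv y_field_mat_def C tens_sv_sv)
  ultimately have "(\<lambda>x. (C * sv 1 (\<rho>, w) x + y_field_sign m b \<nu> * ?X x) - C * sv 1 (\<rho>, w) x)
      \<in> gen_mod_rel m n q"
    using gen_mod_rel_diff gen_mod_rel_smul[OF W[OF \<rho>]] by fastforce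
  then have "(\<lambda>x. y_field_sign m b \<nu> * ?X x) \<in> gen_mod_rel m n q" by simp
  then show ?thesis by (rule gen_mod_rel_cancel) (simp add: y_field_sign_def)
qed

lemma sum_lessThan_add:
  fixes f :: "nat \<Rightarrow> 'a::comm_monoid_add"
  shows "(\<Sum>l<r + k. f l) = (\<Sum>l<r. f l) + (\<Sum>l<k. f (l + r))"
proof -
  have split: "{..<r + k} = {..<r} \<union> {r..<r + k}" by auto
  have "(\<Sum>l<r + k. f l) = (\<Sum>l<r. f l) + (\<Sum>l\<in>{r..<r + k}. f l)"
    unfolding split by (rule sum.union_disjoint) auto
  also have "(\<Sum>l\<in>{r..<r + k}. f l) = (\<Sum>l<k. f (l + r))"
    using sum.shift_bounds_nat_ivl[of f 0 r k] by (simp add: lessThan_atLeast0 add.commute)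
  finally show ?thesis .
qed

lemma tens_xi_top_prefix:
  assumes n: "1 \<le> n" and b: "b \<noteq> m + n"
  shows "tens (sv 1 \<nu>) (xi m (m + n) b (replicate r (m + n) @ s))
    = (\<lambda>x. (\<Sum>k<r. xi_sign m (m + n) b k
                     * sv 1 (\<nu>, replicate k (m + n) @ b # replicate (r - 1 - k) (m + n) @ s) x)
         + (\<Sum>k<length s. if s ! k = m + n
             then xi_sign m (m + n) b (r + (\<Sum>l<k. vpar m (s ! l))) * sv 1 (\<nu>, replicate r (m + n) @ s[k := b]) x
             else (0::'a::comm_ring_1)))" (is "_ = ?rhs")
proof
  fix x
  let ?w = "replicate r (m + n) @ s"
  let ?f = "\<lambda>k. if ?w ! k = m + n then xi_sign m (m + n) b (0 + (\<Sum>l<k. vpar m (?w ! l)))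
                  * sv 1 (\<nu>, ?w[k := b]) x else (0::'a)"
  have head: "?f k = xi_sign m (m + n) b k
      * sv 1 (\<nu>, replicate k (m + n) @ b # replicate (r - 1 - k) (m + n) @ s) x" if "k < r" for k
  proof -
    have "(\<Sum>l<k. vpar m (?w ! l)) = k" using that by (simp add: nth_append vpar_top[OF n])
    then show ?thesis using that by (simp add: nth_append list_update_append replicate_update vpar_top[OF n])
  qed
  have tail: "?f (k + r) = (if s ! k = m + n
      then xi_sign m (m + n) b (r + (\<Sum>l<k. vpar m (s ! l))) * sv 1 (\<nu>, replicate r (m + n) @ s[k := b]) x
      else 0)" for k
  proof -
    have "(\<Sum>l<r + k. vpar m (?w ! l)) = r + (\<Sum>l<k. vpar m (s ! l))"
      by (simp add: sum_lessThan_add nth_append vpar_top[OF n])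
    then show ?thesis by (simp add: nth_append list_update_append add.commute[of k])
  qed
  have "tens (sv 1 \<nu>) (xi m (m + n) b ?w) x = (\<Sum>k<r. ?f k) + (\<Sum>k<length s. ?f (k + r))"
    unfolding xi_eq_xi_off[OF not_sym[OF b]] tens_xi_off length_append length_replicate sum_lessThan_add
    by simp
  then show "tens (sv 1 \<nu>) (xi m (m + n) b ?w) x = ?rhs x"
    by (simp add: head tail)
qed

lemma head_sum_mod_Krel:
  assumes \<nu>: "valid_rmon m n \<nu>" and b: "b \<in> {1..m+n}" and s: "set s \<subseteq> {1..m+n}" and n: "1 \<le> n"
    and q: "r + length s = q"
  shows "(\<lambda>x. (\<Sum>k<r. xi_sign m (m + n) b k
                      * sv 1 (\<nu>, replicate k (m + n) @ b # replicate (r - 1 - k) (m + n) @ s) x)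
            - of_nat r * - ((-1) ^ ((1 + vpar m b) * r)) * sv 1 (\<nu>, replicate (r - 1) (m + n) @ b # s) x)
     \<in> lspan (Krel m n q :: (bidx \<Rightarrow> 'a::comm_ring_1) set)"
proof -
  let ?e = "- ((-1::'a) ^ (vpar m b * vpar m (m + n)))"
  let ?tgt = "sv 1 (\<nu>, replicate (r - 1) (m + n) @ b # s) :: bidx \<Rightarrow> 'a"
  let ?D = "\<lambda>k x. sv 1 (\<nu>, replicate k (m + n) @ b # replicate (r - 1 - k) (m + n) @ s) x
                 - ?e ^ (r - 1 - k) * ?tgt x"
  have D: "?D k \<in> lspan (Krel m n q)" if "k < r" for k
    using move_past_top_letters[OF \<nu> b s n, of k "r - 1 - k" q, where 'a='a] that q by simp
  have "(\<lambda>x. \<Sum>k<r. xi_sign m (m + n) b k * ?D k x) \<in> lspan (Krel m n q)"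
    by (rule lspan_sum[OF finite_lessThan]) (rule lspan_smul[OF D], simp)
  moreover have summand: "xi_sign m (m + n) b k * ?D k x
      = xi_sign m (m + n) b k * sv 1 (\<nu>, replicate k (m + n) @ b # replicate (r - 1 - k) (m + n) @ s) x
        - - ((-1) ^ ((1 + vpar m b) * r)) * ?tgt x" if "k < r" for k x
  proof -
    have "xi_sign m (m + n) b k * ?D k x
        = xi_sign m (m + n) b k * sv 1 (\<nu>, replicate k (m + n) @ b # replicate (r - 1 - k) (m + n) @ s) x
          - (xi_sign m (m + n) b k * ?e ^ (r - 1 - k)) * ?tgt x"
      by (simp add: algebra_simps)
    then show ?thesis by (simp only: xi_sign_top_shift[OF n that])
  qed
  have "(\<Sum>k<r. xi_sign m (m + n) b k * ?D k x)
      = (\<Sum>k<r. xi_sign m (m + n) b k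
           * sv 1 (\<nu>, replicate k (m + n) @ b # replicate (r - 1 - k) (m + n) @ s) x)
        - of_nat r * - ((-1) ^ ((1 + vpar m b) * r)) * ?tgt x" for x
  proof -
    have "(\<Sum>k<r. xi_sign m (m + n) b k * ?D k x) = (\<Sum>k<r. xi_sign m (m + n) b k
        * sv 1 (\<nu>, replicate k (m + n) @ b # replicate (r - 1 - k) (m + n) @ s) x
        - - ((-1) ^ ((1 + vpar m b) * r)) * ?tgt x)"
      by (rule sum.cong[OF refl]) (rule summand, simp)
    then show ?thesis by (simp only: sum_subtractf sum_constant card_lessThan mult.assoc)
  qed
  ultimately show ?thesis by (simp only:)
qed

lemma lower_top_power:
  assumes n: "1 \<le> n" and r: "1 \<le> r" and s: "set s \<subseteq> {1..m+n}" and q: "r + length s = q"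
    and b: "b \<in> {1..m+n}" and \<nu>: "valid_rmon m n \<nu>"
    and IH: "\<And>\<nu>' s'. valid_rmon m n \<nu>' \<Longrightarrow> length s' = length s \<Longrightarrow> set s' \<subseteq> {1..m+n}
       \<Longrightarrow> (sv 1 (\<nu>', replicate r (m + n) @ s') :: bidx \<Rightarrow> 'a::field_char_0) \<in> gen_mod_rel m n q"
  shows "(sv 1 (\<nu>, replicate (r - 1) (m + n) @ b # s) :: bidx \<Rightarrow> 'a) \<in> gen_mod_rel m n q"
proof (cases "b = m + n")
  case True
  then have top: "replicate (r - 1) (m + n) @ b # s = replicate r (m + n) @ s"
    using r by (cases r) (simp_all add: replicate_append_same[symmetric])
  show ?thesis unfolding top by (rule IH[OF \<nu> refl s])
next
  case False
  let ?head = "\<lambda>x. \<Sum>k<r. xi_sign m (m + n) b k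
                 * sv 1 (\<nu>, replicate k (m + n) @ b # replicate (r - 1 - k) (m + n) @ s) x :: 'a"
  let ?tail = "\<lambda>x. \<Sum>k<length s. if s ! k = m + n
         then xi_sign m (m + n) b (r + (\<Sum>l<k. vpar m (s ! l))) * sv 1 (\<nu>, replicate r (m + n) @ s[k := b]) x
         else (0::'a)"
  let ?c = "of_nat r * - ((-1::'a) ^ ((1 + vpar m b) * r))"
  let ?tgt = "sv 1 (\<nu>, replicate (r - 1) (m + n) @ b # s) :: bidx \<Rightarrow> 'a"
  have "(tens (sv 1 \<nu>) (xi m (m + n) b (replicate r (m + n) @ s)) :: bidx \<Rightarrow> 'a) \<in> gen_mod_rel m n q"
    using False b by (intro tens_xi_top_in_gen_mod_rel[OF n _ _ \<nu> IH[OF _ refl s]]) auto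
  then have X: "(\<lambda>x. ?head x + ?tail x) \<in> gen_mod_rel m n q"
    unfolding tens_xi_top_prefix[OF n False] .
  have tail: "?tail \<in> gen_mod_rel m n q"
  proof (rule gen_mod_rel_sum[OF finite_lessThan])
    fix k assume "k \<in> {..<length s}"
    then have updated: "(sv 1 (\<nu>, replicate r (m + n) @ s[k := b]) :: bidx \<Rightarrow> 'a) \<in> gen_mod_rel m n q"
      using s b set_update_subset_insert[of s k b] by (intro IH[OF \<nu>]) auto
    show "(\<lambda>x. if s ! k = m + n
        then xi_sign m (m + n) b (r + (\<Sum>l<k. vpar m (s ! l))) * sv 1 (\<nu>, replicate r (m + n) @ s[k := b]) x
        else (0::'a)) \<in> gen_mod_rel m n q"
      using gen_mod_rel_smul[OF updated] gen_mod_rel_zero by (cases "s ! k = m + n") simp_all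
  qed
  have head: "(\<lambda>x. ?head x - ?c * ?tgt x) \<in> gen_mod_rel m n q"
    by (rule gen_mod_rel_lspan[OF head_sum_mod_Krel[OF \<nu> b s n q]])
  have "(\<lambda>x. (?head x + ?tail x) - ?tail x - (?head x - ?c * ?tgt x)) \<in> gen_mod_rel m n q"
    by (intro gen_mod_rel_diff X tail head)
  then have "(\<lambda>x. ?c * ?tgt x) \<in> gen_mod_rel m n q" by simp
  moreover have "?c \<noteq> 0" using r by (simp add: minus_one_power_iff)
  ultimately show ?thesis by (rule gen_mod_rel_cancel)
qed

lemma top_prefix_word_in_gen_mod_rel:
  assumes m: "1 \<le> m" and n: "1 \<le> n"
  shows "length s \<le> q \<Longrightarrow> set s \<subseteq> {1..m+n} \<Longrightarrow> valid_rmon m n \<nu>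
    \<Longrightarrow> (sv 1 (\<nu>, replicate (q - length s) (m + n) @ s) :: bidx \<Rightarrow> 'a::field_char_0) \<in> gen_mod_rel m n q"
proof (induction "length s" arbitrary: s \<nu>)
  case 0
  then show ?case using gen_mod_rel_gen_sub[OF top_word_in_gen_sub[OF m n, of \<nu> q]] by simp
next
  case (Suc L)
  from Suc.hyps(2) obtain b s' where s: "s = b # s'" and L: "L = length s'" by (cases s) auto
  have b: "b \<in> {1..m+n}" and s': "set s' \<subseteq> {1..m+n}" using Suc.prems(2) s by auto
  have r: "1 \<le> q - length s'" and q: "q - length s' + length s' = q" using Suc.prems(1) s by auto
  have IH: "(sv 1 (\<nu>', replicate (q - length s') (m + n) @ s'') :: bidx \<Rightarrow> 'a) \<in> gen_mod_rel m n q"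
    if "valid_rmon m n \<nu>'" "length s'' = length s'" "set s'' \<subseteq> {1..m+n}" for \<nu>' s''
    using Suc.hyps(1)[of s'' \<nu>'] that L q by (simp only:)
  have "replicate (q - length s) (m + n) @ s = replicate (q - length s' - 1) (m + n) @ b # s'"
    using s by simp
  then show ?case
    using lower_top_power[OF n r s' q b Suc.prems(3) IH] by (simp only:)
qed

theorem mainTheorem10:
  fixes m n q :: nat
  assumes "m \<ge> 1" and "n \<ge> 1"
    and alg_closed: "\<forall>p :: 'a::field_char_0 poly. degree p > 0 \<longrightarrow> (\<exists>x. poly p x = 0)"
  shows "\<forall>v \<in> (Mcar m n q :: (bidx \<Rightarrow> 'a) set).
           \<exists>u \<in> gen_sub m n (vgen m n q). \<exists>k \<in> lspan (Krel m n q). v = (\<lambda>b. u b + k b)"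
proof
  fix v :: "bidx \<Rightarrow> 'a"
  assume v: "v \<in> Mcar m n q"
  then have fin: "fin_supp v" by (simp add: Mcar_def fin_supp_def)
  have "(\<lambda>x. \<Sum>y\<in>{y. v y \<noteq> 0}. v y * sv 1 y x) \<in> gen_mod_rel m n q"
  proof (rule gen_mod_rel_sum)
    show "finite {y. v y \<noteq> 0}" using fin by (simp add: fin_supp_def)
    fix y assume "y \<in> {y. v y \<noteq> 0}"
    then have "valid_rmon m n (fst y) \<and> length (snd y) = q \<and> set (snd y) \<subseteq> {1..m+n}"
      using v unfolding Mcar_def by blast
    moreover obtain \<nu> w where y: "y = (\<nu>, w)" by (cases y)
    ultimately have "valid_rmon m n \<nu>" "length w = q" "set w \<subseteq> {1..m+n}" by auto
    then have "(sv 1 y :: bidx \<Rightarrow> 'a) \<in> gen_mod_rel m n q"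
      using top_prefix_word_in_gen_mod_rel[OF assms(1,2), of w q \<nu>] y by simp
    then show "(\<lambda>x. v y * sv 1 y x) \<in> gen_mod_rel m n q" by (rule gen_mod_rel_smul)
  qed
  then have "v \<in> gen_mod_rel m n q" using fin_supp_expansion[OF fin] by simp
  then show "\<exists>u \<in> gen_sub m n (vgen m n q). \<exists>k \<in> lspan (Krel m n q). v = (\<lambda>b. u b + k b)"
    unfolding gen_mod_rel_def by blast
qed

end
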